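(* Assume Case 2 holds and $d>0$. Let $(A,B)=(n_{s-1},m_{s-1})$ and for $n\ge1$ put $$(A_n,B_n)=(\gamma_n-(\gamma-A)d^{n-1},\ Bd^{n-1}),\qquad (A_n^*,B_n^* )=\big((\delta^{n-1}+\delta^{n-2}B+\cdots+\delta B^{n-2}+B^{n-1})A,\ B^n\big).$$ (i) If $\delta<T_{s-1}$, then for every $n\ge1$, $(A_n,B_n)$ is the vertex of $N(Q^n)$ immediately preceding $(\gamma_n,d^n)$ (in order of increasing $x$-coordinate), the segment joining them has slope $-l_1^{-1}$, and $\delta^n$ is strictly smaller than the $y$-intercept of the line through $(\gamma_n,d^n)$ and $(A_n,B_n)$. (ii) If $\delta=T_{s-1}$, then for every $n\ge1$, $(A_n^*,B_n^* )$ is the vertex of $N(Q^n)$ immediately preceding $(\gamma_n,d^n)$, the segment joining them has slope $-l_1^{-1}$, and $\delta^n$ equals the $y$-intercept of the line through $(\gamma_n,d^n)$ and $(A_n^*,B_n^* )$.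
   Context: Let $f(z,w)=(p(z),q(z,w))$ be a holomorphic skew product germ at the origin of $\mathbb{C}^2$ with $f(0,0)=(0,0)$, where $p(z)=a_\delta z^\delta+O(z^{\delta+1})$ with $a_\delta\neq0$ and integer $\delta\ge1$, and $q(z,w)=\sum_{i+j\ge1}b_{ij}z^iw^j$ is not identically zero. For $n\ge1$ write $f^n=(p^n,Q^n)$. The Newton polygon $N(g)$ of a nonzero germ $g=\sum g_{ij}z^iw^j$ is the convex hull of $\bigcup_{g_{ij}\neq0}\{(x,y):x\ge i,\ y\ge j\}$. Let $(n_1,m_1),\dots,(n_s,m_s)$ be the vertices of $N(q)$ with $n_1<\cdots<n_s$, $m_1>\cdots>m_s$; for $1\le k\le s-1$ let $T_k$ be the $y$-intercept of the line through $(n_k,m_k)$ and $(n_{k+1},m_{k+1})$. Case 2 means: $s>1$ and $\delta\le T_{s-1}$; set $(\gamma,d)=(n_s,m_s)$ and $l_1=\frac{n_s-n_{s-1}}{m_{s-1}-m_s}$. Define $\gamma_n=\gamma(\delta^{n-1}+\delta^{n-2}d+\cdots+d^{n-1})$. *)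

theory Defs
  imports "HOL-Analysis.Analysis"
begin

definition has_expansion1 :: "(nat \<Rightarrow> complex) \<Rightarrow> (complex \<Rightarrow> complex) \<Rightarrow> bool" where
  "has_expansion1 a p \<longleftrightarrow>
     (\<exists>r>0. \<forall>z. norm z < r \<longrightarrow> ((\<lambda>k. a k * z ^ k) has_sum p z) UNIV)"

definition has_expansion2 :: "(nat \<Rightarrow> nat \<Rightarrow> complex) \<Rightarrow> (complex \<Rightarrow> complex \<Rightarrow> complex) \<Rightarrow> bool" where
  "has_expansion2 c g \<longleftrightarrow>
     (\<exists>r>0. \<forall>z w. norm z < r \<longrightarrow> norm w < r \<longrightarrow>
        ((\<lambda>(i,j). c i j * z ^ i * w ^ j) has_sum g z w) UNIV)"

definition germ_coeffs :: "(complex \<Rightarrow> complex \<Rightarrow> complex) \<Rightarrow> nat \<Rightarrow> nat \<Rightarrow> complex" where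
  "germ_coeffs g = (SOME c. has_expansion2 c g)"

definition newton_polygon :: "(nat \<Rightarrow> nat \<Rightarrow> complex) \<Rightarrow> (real \<times> real) set" where
  "newton_polygon c = convex hull
     (\<Union>{ {(x,y). x \<ge> real i \<and> y \<ge> real j} | i j. c i j \<noteq> 0 })"

definition np_vertices :: "(nat \<Rightarrow> nat \<Rightarrow> complex) \<Rightarrow> (real \<times> real) set" where
  "np_vertices c = {v. v extreme_point_of newton_polygon c}"

text \<open>Second component Q^n of the iterate f^n = (p^n, Q^n) of f = (p,q), n \<ge> 1:
  Q^1 = q, Q^(n+1)(z,w) = q(p^n z, Q^n(z,w)).\<close>
fun skewQ :: "(complex \<Rightarrow> complex) \<Rightarrow> (complex \<Rightarrow> complex \<Rightarrow> complex) \<Rightarrow> nat \<Rightarrow> complex \<Rightarrow> complex \<Rightarrow> complex" where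
  "skewQ p q 0 z w = w"
| "skewQ p q (Suc n) z w = q ((p ^^ n) z) (skewQ p q n z w)"

definition y_intercept :: "real \<times> real \<Rightarrow> real \<times> real \<Rightarrow> real" where
  "y_intercept P1 P2 = snd P1 - (snd P2 - snd P1) / (fst P2 - fst P1) * fst P1"

definition slope :: "real \<times> real \<Rightarrow> real \<times> real \<Rightarrow> real" where
  "slope P1 P2 = (snd P2 - snd P1) / (fst P2 - fst P1)"

definition preceding_vertex :: "(nat \<Rightarrow> nat \<Rightarrow> complex) \<Rightarrow> real \<times> real \<Rightarrow> real \<times> real \<Rightarrow> bool" where
  "preceding_vertex c P V \<longleftrightarrow> P \<in> np_vertices c \<and> V \<in> np_vertices c \<and> fst P < fst V \<and>
     (\<forall>X \<in> np_vertices c. \<not> (fst P < fst X \<and> fst X < fst V))"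

end

theory Submission
  imports Defs "HOL-Complex_Analysis.Cauchy_Integral_Formula"
begin

(*
  Weight the monomial z^k w^l by (B - d) k + (gamma - A) l, which is constant along the last edge
  of N(q). Each Q^(n+1) = q(p^n, Q^n) is computed by substituting double power series, and only
  the terms of least weight matter: for p^n this is the single term z^(delta^n), and by induction
  for Q^n it is a segment ending at (gamma_n, d^n). If delta < T_(s-1), the weight of w in
  Q^n exceeds its weight along the last edge, so the term z^gamma w^d of q alone has least weight
  and the segment is transported; if delta = T_(s-1), the two weights are proportional and the
  whole last edge of q contributes, its two end terms producing the two ends of the new segment.
  A segment of least weight whose ends lie in the support consists of two consecutive vertices
  of the Newton polygon.
*)

section \<open>Newton polygons\<close>

definition edge_supported ::
    "nat \<Rightarrow> nat \<Rightarrow> (nat \<Rightarrow> nat \<Rightarrow> complex) \<Rightarrow> nat \<Rightarrow> nat \<Rightarrow> nat \<Rightarrow> bool" where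
  "edge_supported \<alpha> \<beta> f L lo hi \<longleftrightarrow>
     (\<forall>k l. f k l \<noteq> 0 \<longrightarrow> L \<le> \<alpha> * k + \<beta> * l \<and> (\<alpha> * k + \<beta> * l = L \<longrightarrow> lo \<le> k \<and> k \<le> hi))"

lemma coeff_in_newton_polygon:
  assumes "c i j \<noteq> 0"
  shows "(real i, real j) \<in> newton_polygon c"
  unfolding newton_polygon_def
  by (rule hull_inc, rule UnionI[of "{(x,y). x \<ge> real i \<and> y \<ge> real j}"]) (use assms in auto)

lemma newton_polygon_shift:
  assumes "X \<in> newton_polygon c" "s \<ge> 0" "t \<ge> 0"
  shows "(s,t) + X \<in> newton_polygon c"
proof -
  let ?U = "\<Union>{ {(x,y). x \<ge> real i \<and> y \<ge> real j} | i j. c i j \<noteq> 0 }"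
  have "(\<lambda>x. (s,t) + x) ` ?U \<subseteq> ?U"
  proof
    fix z assume "z \<in> (\<lambda>x. (s,t) + x) ` ?U"
    then obtain x i j where "z = (s,t) + x" "c i j \<noteq> 0" "fst x \<ge> real i" "snd x \<ge> real j"
      by auto
    then have "z \<in> {(x,y). x \<ge> real i \<and> y \<ge> real j}" using assms(2,3) by (cases x) auto
    then show "z \<in> ?U" using \<open>c i j \<noteq> 0\<close> by blast
  qed
  then have "convex hull ((\<lambda>x. (s,t) + x) ` ?U) \<subseteq> convex hull ?U" by (rule hull_mono)
  moreover have "(s,t) + X \<in> convex hull ((\<lambda>x. (s,t) + x) ` ?U)"
    using assms(1) unfolding newton_polygon_def convex_hull_translation by blast
  ultimately show ?thesis unfolding newton_polygon_def by blast
qed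

lemma newton_polygon_lower_bound:
  assumes "\<And>i j. c i j \<noteq> 0 \<Longrightarrow> m \<le> \<alpha> * real i + \<beta> * real j" "\<alpha> \<ge> 0" "\<beta> \<ge> 0"
    and "X \<in> newton_polygon c"
  shows "m \<le> \<alpha> * fst X + \<beta> * snd X"
proof -
  let ?U = "\<Union>{ {(x,y). x \<ge> real i \<and> y \<ge> real j} | i j. c i j \<noteq> 0 }"
  let ?H = "{X::real\<times>real. m \<le> \<alpha> * fst X + \<beta> * snd X}"
  have "?H = {X. inner (\<alpha>,\<beta>) X \<ge> m}" by (auto simp: inner_prod_def)
  then have "convex ?H" by (simp add: convex_halfspace_ge)
  moreover have "?U \<subseteq> ?H"
  proof
    fix z assume "z \<in> ?U"
    then obtain i j where ij: "c i j \<noteq> 0" "fst z \<ge> real i" "snd z \<ge> real j" by auto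
    have "m \<le> \<alpha> * real i + \<beta> * real j" using assms(1) ij(1) .
    also have "\<dots> \<le> \<alpha> * fst z + \<beta> * snd z"
      using ij assms(2,3) by (intro add_mono mult_left_mono) auto
    finally show "z \<in> ?H" by simp
  qed
  ultimately have "convex hull ?U \<subseteq> ?H" by (simp add: hull_minimal)
  then show ?thesis using assms(4) unfolding newton_polygon_def by blast
qed

lemma newton_polygon_nat_lower_bound:
  fixes \<alpha> \<beta> L :: nat
  assumes "\<And>i j. c i j \<noteq> 0 \<Longrightarrow> L \<le> \<alpha> * i + \<beta> * j" and "X \<in> newton_polygon c"
  shows "real L \<le> real \<alpha> * fst X + real \<beta> * snd X"
proof (rule newton_polygon_lower_bound[OF _ _ _ assms(2)])
  fix i j assume "c i j \<noteq> 0"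
  then show "real L \<le> real \<alpha> * real i + real \<beta> * real j"
    using assms(1) by (metis of_nat_add of_nat_le_iff of_nat_mult)
qed auto

lemma extreme_point_of_two_supports:
  fixes S :: "(real \<times> real) set"
  assumes "X \<in> S"
    and h1: "\<And>Y. Y \<in> S \<Longrightarrow> a1 * fst X + b1 * snd X \<le> a1 * fst Y + b1 * snd Y"
    and h2: "\<And>Y. Y \<in> S \<Longrightarrow> a2 * fst X + b2 * snd X \<le> a2 * fst Y + b2 * snd Y"
    and det: "a1 * b2 \<noteq> a2 * b1"
  shows "X extreme_point_of S"
  unfolding extreme_point_of_def
proof (intro conjI ballI notI)
  show "X \<in> S" by fact
  fix P Q assume P: "P \<in> S" and Q: "Q \<in> S" and XPQ: "X \<in> open_segment P Q"
  then obtain t where t: "0 < t" "t < 1" "X = (1 - t) *\<^sub>R P + t *\<^sub>R Q"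
    by (auto simp: in_segment)
  \<comment> \<open>A linear functional minimised at an interior point of a segment is constant on it.\<close>
  have fX: "fst X = (1-t) * fst P + t * fst Q" and sX: "snd X = (1-t) * snd P + t * snd Q"
    using t by auto
  have on_P: "a * fst X + b * snd X = a * fst P + b * snd P"
    if min: "\<And>Y. Y \<in> S \<Longrightarrow> a * fst X + b * snd X \<le> a * fst Y + b * snd Y" for a b
  proof (rule ccontr)
    assume "a * fst X + b * snd X \<noteq> a * fst P + b * snd P"
    then have "(1-t) * (a * fst X + b * snd X) < (1-t) * (a * fst P + b * snd P)"
      using min[OF P] t by simp
    moreover have "t * (a * fst X + b * snd X) \<le> t * (a * fst Q + b * snd Q)"
      using min[OF Q] t by simp
    moreover have "a * fst X + b * snd X = (1-t) * (a * fst P + b * snd P) + t * (a * fst Q + b * snd Q)"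
      unfolding fX sX by (simp add: algebra_simps)
    ultimately show False by (simp add: algebra_simps)
  qed
  have e1: "a1 * (fst X - fst P) + b1 * (snd X - snd P) = 0"
    and e2: "a2 * (fst X - fst P) + b2 * (snd X - snd P) = 0"
    using on_P[OF h1] on_P[OF h2] by (simp_all add: algebra_simps)
  have "(a1 * b2 - a2 * b1) * (fst X - fst P) = 0" and "(a1 * b2 - a2 * b1) * (snd X - snd P) = 0"
    using arg_cong2[OF e1 e2, of "\<lambda>u v. b2 * u - b1 * v"] arg_cong2[OF e1 e2, of "\<lambda>u v. a1 * v - a2 * u"]
    by (simp_all add: algebra_simps)
  then have "X = P" using det by (simp add: prod_eq_iff)
  then show False using XPQ by (simp add: open_segment_def)
qed

lemma newton_polygon_extreme_point_minimal:
  assumes X: "X extreme_point_of newton_polygon c" and Y: "Y \<in> newton_polygon c"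
    and "fst Y \<le> fst X" "snd Y \<le> snd X"
  shows "Y = X"
proof (rule ccontr)
  assume "Y \<noteq> X"
  define s where "s = fst X - fst Y"
  define t where "t = snd X - snd Y"
  have st: "s \<ge> 0" "t \<ge> 0" "(s,t) \<noteq> (0,0)" and XY: "X = (s,t) + Y"
    using assms(3,4) \<open>Y \<noteq> X\<close> unfolding s_def t_def by (auto simp: prod_eq_iff)
  have "(2 * s, 2 * t) + Y \<in> newton_polygon c" using newton_polygon_shift Y st by simp
  moreover have "X \<in> open_segment Y ((2 * s, 2 * t) + Y)"
    unfolding in_segment XY using st(3)
    by (intro conjI exI[of _ "1/2"]) (auto simp: prod_eq_iff algebra_simps)
  ultimately show False using X Y unfolding extreme_point_of_def by blast
qed

lemma vertex_coeff_nonzero: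
  assumes "X \<in> np_vertices c"
  obtains i j where "X = (real i, real j)" "c i j \<noteq> 0"
proof -
  have X: "X extreme_point_of newton_polygon c" using assms by (simp add: np_vertices_def)
  then have "X \<in> \<Union>{ {(x,y). x \<ge> real i \<and> y \<ge> real j} | i j. c i j \<noteq> 0 }"
    unfolding newton_polygon_def by (rule extreme_point_of_convex_hull)
  then obtain i j where ij: "c i j \<noteq> 0" "fst X \<ge> real i" "snd X \<ge> real j" by auto
  then have "(real i, real j) = X"
    using newton_polygon_extreme_point_minimal[OF X coeff_in_newton_polygon] by simp
  then show ?thesis using that ij(1) by blast
qed

lemma extreme_point_not_between:
  fixes P X R :: "real \<times> real"
  assumes "X extreme_point_of S" "P \<in> S" "R \<in> S" "b \<noteq> 0"
    and "a * fst P + b * snd P = K" "a * fst X + b * snd X = K" "a * fst R + b * snd R = K"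
    and "fst P < fst X" "fst X < fst R"
  shows False
proof -
  define t where "t = (fst X - fst P) / (fst R - fst P)"
  have t: "0 < t" "t < 1" using assms(8,9) unfolding t_def by (auto simp: field_simps)
  have "t * (fst R - fst P) = fst X - fst P" using assms(8,9) unfolding t_def by simp
  then have fX: "fst X = (1 - t) * fst P + t * fst R" by (simp add: algebra_simps)
  have "b * snd X = K - a * fst X" using assms(6) by simp
  also have "\<dots> = (1 - t) * (K - a * fst P) + t * (K - a * fst R)" unfolding fX by (simp add: algebra_simps)
  also have "\<dots> = b * ((1 - t) * snd P + t * snd R)"
  proof -
    have h1: "K - a * fst P = b * snd P" and h2: "K - a * fst R = b * snd R"
      using assms(5,7) by simp_all
    show ?thesis unfolding h1 h2 by (simp add: algebra_simps)
  qed
  finally have "snd X = (1 - t) * snd P + t * snd R" using assms(4) by simp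
  then have "X \<in> open_segment P R"
    using fX t assms(8,9) unfolding in_segment by (auto simp: prod_eq_iff)
  then show False using assms(1-3) unfolding extreme_point_of_def by blast
qed

lemma newton_polygon_extreme_point:
  fixes \<alpha> \<beta> \<mu> \<nu> L :: nat
  assumes c0: "c i0 j0 \<noteq> 0" and level: "\<alpha> * i0 + \<beta> * j0 = L"
    and above: "\<And>k l. c k l \<noteq> 0 \<Longrightarrow> L \<le> \<alpha> * k + \<beta> * l"
    and tie: "\<And>k l. c k l \<noteq> 0 \<Longrightarrow> \<alpha> * k + \<beta> * l = L \<Longrightarrow> \<mu> * i0 + \<nu> * j0 \<le> \<mu> * k + \<nu> * l"
    and indep: "\<alpha> * \<nu> \<noteq> \<beta> * \<mu>"
  shows "(real i0, real j0) extreme_point_of newton_polygon c"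
proof -
  \<comment> \<open>Tilting the supporting line slightly turns the tie-break into a strict support.\<close>
  define M where "M = \<mu> * i0 + \<nu> * j0 + 1"
  have tilted: "M * L + (\<mu> * i0 + \<nu> * j0) \<le> (M * \<alpha> + \<mu>) * k + (M * \<beta> + \<nu>) * l"
    if ckl: "c k l \<noteq> 0" for k l
  proof (cases "\<alpha> * k + \<beta> * l = L")
    case True
    then show ?thesis using tie[OF ckl True] by (simp add: algebra_simps flip: True)
  next
    case False
    then have "M * (L + 1) \<le> M * (\<alpha> * k + \<beta> * l)" using above[OF ckl] by (intro mult_le_mono2) linarith
    then show ?thesis unfolding M_def by (simp add: algebra_simps)
  qed
  let ?X = "(real i0, real j0)"
  show ?thesis
  proof (rule extreme_point_of_two_supports[of ?X _ "real \<alpha>" "real \<beta>" "real (M * \<alpha> + \<mu>)" "real (M * \<beta> + \<nu>)"])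
    show "?X \<in> newton_polygon c" using c0 by (rule coeff_in_newton_polygon)
  next
    fix Y assume "Y \<in> newton_polygon c"
    then have "real L \<le> real \<alpha> * fst Y + real \<beta> * snd Y"
      using above by (intro newton_polygon_nat_lower_bound)
    then show "real \<alpha> * fst ?X + real \<beta> * snd ?X \<le> real \<alpha> * fst Y + real \<beta> * snd Y"
      by (simp flip: level)
  next
    fix Y assume "Y \<in> newton_polygon c"
    then have "real (M * L + (\<mu> * i0 + \<nu> * j0)) \<le> real (M * \<alpha> + \<mu>) * fst Y + real (M * \<beta> + \<nu>) * snd Y"
      using tilted by (intro newton_polygon_nat_lower_bound)
    then show "real (M * \<alpha> + \<mu>) * fst ?X + real (M * \<beta> + \<nu>) * snd ?X
        \<le> real (M * \<alpha> + \<mu>) * fst Y + real (M * \<beta> + \<nu>) * snd Y"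
      by (simp add: algebra_simps flip: level)
  next
    show "real \<alpha> * real (M * \<beta> + \<nu>) \<noteq> real (M * \<alpha> + \<mu>) * real \<beta>"
      using indep by (simp add: algebra_simps) (metis of_nat_eq_iff of_nat_mult)
  qed
qed

lemma minimal_level_vertex:
  fixes \<alpha> \<beta> :: nat
  assumes "c k l \<noteq> 0" "\<beta> > 0"
  obtains i0 j0 where "(real i0, real j0) \<in> np_vertices c"
    and "\<And>k l. c k l \<noteq> 0 \<Longrightarrow> \<alpha> * i0 + \<beta> * j0 \<le> \<alpha> * k + \<beta> * l"
proof -
  define m where "m = (LEAST m. \<exists>k l. c k l \<noteq> 0 \<and> \<alpha> * k + \<beta> * l = m)"
  have "\<exists>k l. c k l \<noteq> 0 \<and> \<alpha> * k + \<beta> * l = m"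
    unfolding m_def by (rule LeastI[of _ "\<alpha> * k + \<beta> * l"]) (use assms(1) in blast)
  then have "\<exists>i l. c i l \<noteq> 0 \<and> \<alpha> * i + \<beta> * l = m" by blast
  define i0 where "i0 = (LEAST i. \<exists>l. c i l \<noteq> 0 \<and> \<alpha> * i + \<beta> * l = m)"
  obtain j0 where j0: "c i0 j0 \<noteq> 0" "\<alpha> * i0 + \<beta> * j0 = m"
    unfolding i0_def using LeastI_ex[OF \<open>\<exists>i l. _\<close>] by blast
  have min: "m \<le> \<alpha> * k + \<beta> * l" if "c k l \<noteq> 0" for k l
    unfolding m_def by (rule Least_le) (use that in blast)
  have leftmost: "i0 \<le> k" if "c k l \<noteq> 0" "\<alpha> * k + \<beta> * l = m" for k l
    unfolding i0_def by (rule Least_le) (use that in blast)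
  have "(real i0, real j0) extreme_point_of newton_polygon c"
    by (rule newton_polygon_extreme_point[where c=c and \<alpha>=\<alpha> and \<beta>=\<beta> and \<mu>=1 and \<nu>=0, OF j0 min])
       (use leftmost assms(2) in auto)
  then show ?thesis using that min j0(2) by (simp add: np_vertices_def)
qed

lemma no_vertex_strictly_between:
  fixes \<alpha> \<beta> L x1 y1 x2 y2 :: nat
  assumes "\<beta> > 0" and "c x1 y1 \<noteq> 0" "c x2 y2 \<noteq> 0"
    and "\<alpha> * x1 + \<beta> * y1 = L" "\<alpha> * x2 + \<beta> * y2 = L"
    and above: "\<And>k l. c k l \<noteq> 0 \<Longrightarrow> L \<le> \<alpha> * k + \<beta> * l"
    and X: "X \<in> np_vertices c" "real x1 < fst X" "fst X < real x2"
  shows False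
proof -
  let ?N = "newton_polygon c"
  have XN: "X extreme_point_of ?N" using X(1) by (simp add: np_vertices_def)
  have P: "(real x1, real y1) \<in> ?N" and R: "(real x2, real y2) \<in> ?N"
    using assms(2,3) by (auto intro: coeff_in_newton_polygon)
  have lP: "real \<alpha> * real x1 + real \<beta> * real y1 = real L"
    and lR: "real \<alpha> * real x2 + real \<beta> * real y2 = real L"
    using assms(4,5) by (metis of_nat_add of_nat_mult)+
  define t where "t = (fst X - real x1) / (real x2 - real x1)"
  have t: "0 \<le> t" "t \<le> 1" using X(2,3) unfolding t_def by (auto simp: field_simps)
  define Y where "Y = (1 - t) *\<^sub>R (real x1, real y1) + t *\<^sub>R (real x2, real y2)"
  have YN: "Y \<in> ?N" unfolding Y_def using convex_convex_hull P R t
    unfolding newton_polygon_def by (intro convexD) auto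
  have "t * (real x2 - real x1) = fst X - real x1" using X(2,3) unfolding t_def by simp
  then have fY: "fst Y = fst X" unfolding Y_def by (simp add: algebra_simps)
  have "real \<alpha> * fst Y + real \<beta> * snd Y
      = (1 - t) * (real \<alpha> * real x1 + real \<beta> * real y1) + t * (real \<alpha> * real x2 + real \<beta> * real y2)"
    unfolding Y_def by (simp add: algebra_simps)
  then have lY: "real \<alpha> * fst Y + real \<beta> * snd Y = real L" unfolding lP lR by (simp add: algebra_simps)
  have "X \<in> ?N" using XN by (simp add: extreme_point_of_def)
  then have "real L \<le> real \<alpha> * fst X + real \<beta> * snd X"
    using above by (intro newton_polygon_nat_lower_bound)
  then have "real \<beta> * snd Y \<le> real \<beta> * snd X" using lY fY by simp
  then have "snd Y \<le> snd X" using assms(1) by simp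
  then have "Y = X" using newton_polygon_extreme_point_minimal[OF XN YN] fY by simp
  then show False
    using extreme_point_not_between[OF XN P R, of "real \<beta>" "real \<alpha>" "real L"] lP lR lY X assms(1) by simp
qed

lemma preceding_vertex_of_edge:
  fixes \<alpha> \<beta> L x1 y1 x2 y2 :: nat
  assumes "\<alpha> > 0" "\<beta> > 0" "x1 < x2"
    and "\<alpha> * x1 + \<beta> * y1 = L" "\<alpha> * x2 + \<beta> * y2 = L"
    and "c x1 y1 \<noteq> 0" "c x2 y2 \<noteq> 0"
    and "edge_supported \<alpha> \<beta> c L x1 x2"
  shows "preceding_vertex c (real x1, real y1) (real x2, real y2)"
proof -
  have above: "\<And>k l. c k l \<noteq> 0 \<Longrightarrow> L \<le> \<alpha> * k + \<beta> * l"
    and range: "\<And>k l. c k l \<noteq> 0 \<Longrightarrow> \<alpha> * k + \<beta> * l = L \<Longrightarrow> x1 \<le> k \<and> k \<le> x2"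
    using assms(8) unfolding edge_supported_def by auto
  have "(real x1, real y1) extreme_point_of newton_polygon c"
    by (rule newton_polygon_extreme_point[where c=c and \<alpha>=\<alpha> and \<beta>=\<beta> and \<mu>=1 and \<nu>=0, OF assms(6,4) above])
       (use range assms(2) in auto)
  moreover have "(real x2, real y2) extreme_point_of newton_polygon c"
  proof (rule newton_polygon_extreme_point[where c=c and \<alpha>=\<alpha> and \<beta>=\<beta> and \<mu>=0 and \<nu>=1, OF assms(7,5) above])
    fix k l assume "c k l \<noteq> 0" "\<alpha> * k + \<beta> * l = L"
    then have "\<alpha> * k + \<beta> * l = \<alpha> * x2 + \<beta> * y2" "\<alpha> * k \<le> \<alpha> * x2"
      using range assms(5) by auto
    then have "\<beta> * y2 \<le> \<beta> * l" by linarith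
    then show "0 * x2 + 1 * y2 \<le> 0 * k + 1 * l" using assms(2) by simp
  next
    show "\<alpha> * 1 \<noteq> \<beta> * 0" using assms(1) by simp
  qed
  ultimately show ?thesis
    using no_vertex_strictly_between[OF assms(2,6,7,4,5) above] assms(3)
    unfolding preceding_vertex_def np_vertices_def by auto
qed

locale last_edge =
  fixes c :: "nat \<Rightarrow> nat \<Rightarrow> complex" and A B \<gamma> d :: nat
  assumes last_max: "\<forall>X \<in> np_vertices c. fst X \<le> real \<gamma>"
    and prev_vertex: "preceding_vertex c (real A, real B) (real \<gamma>, real d)"
begin

lemma A_less_\<gamma>: "A < \<gamma>"
  and start_extreme: "(real A, real B) extreme_point_of newton_polygon c"
  and end_extreme: "(real \<gamma>, real d) extreme_point_of newton_polygon c"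
  using prev_vertex unfolding preceding_vertex_def np_vertices_def by auto

lemma between_no_vertex: "X \<in> np_vertices c \<Longrightarrow> \<not> (real A < fst X \<and> fst X < real \<gamma>)"
  using prev_vertex unfolding preceding_vertex_def by auto

lemma edge_coeffs: "c A B \<noteq> 0" "c \<gamma> d \<noteq> 0"
  using prev_vertex unfolding preceding_vertex_def
  by (metis Pair_inject of_nat_eq_iff vertex_coeff_nonzero)+

lemma d_less_B: "d < B"
proof (rule ccontr)
  assume "\<not> d < B"
  moreover have "(real A, real B) \<in> newton_polygon c"
    using start_extreme by (simp add: extreme_point_of_def)
  ultimately have "(real A, real B) = (real \<gamma>, real d)"
    using newton_polygon_extreme_point_minimal[OF end_extreme, of "(real A, real B)"] A_less_\<gamma> by simp
  then show False using A_less_\<gamma> by simp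
qed

lemma edge_level: "(B - d) * \<gamma> + (\<gamma> - A) * d = (B - d) * A + (\<gamma> - A) * B"
  using A_less_\<gamma> d_less_B by (simp add: algebra_simps diff_mult_distrib diff_mult_distrib2)

lemma support_above_edge:
  assumes "c k l \<noteq> 0"
  shows "(B - d) * A + (\<gamma> - A) * B \<le> (B - d) * k + (\<gamma> - A) * l"
proof (rule ccontr)
  let ?N = "newton_polygon c"
  define \<alpha> \<beta> K where "\<alpha> = B - d" and "\<beta> = \<gamma> - A" and "K = (B - d) * A + (\<gamma> - A) * B"
  have \<beta>: "\<beta> > 0" using A_less_\<gamma> unfolding \<beta>_def by simp
  have KA: "real \<alpha> * real A + real \<beta> * real B = real K" unfolding \<alpha>_def \<beta>_def K_def by simp
  have "real K = real (\<alpha> * \<gamma> + \<beta> * d)" unfolding \<alpha>_def \<beta>_def K_def edge_level ..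
  then have K\<gamma>: "real \<alpha> * real \<gamma> + real \<beta> * real d = real K" by simp
  assume "\<not> (B - d) * A + (\<gamma> - A) * B \<le> (B - d) * k + (\<gamma> - A) * l"
  then have "\<not> K \<le> \<alpha> * k + \<beta> * l" unfolding K_def \<alpha>_def \<beta>_def .
  obtain i0 j0 where X: "(real i0, real j0) \<in> np_vertices c"
    and min: "\<And>k l. c k l \<noteq> 0 \<Longrightarrow> \<alpha> * i0 + \<beta> * j0 \<le> \<alpha> * k + \<beta> * l"
    using minimal_level_vertex[where c=c and \<alpha>=\<alpha> and \<beta>=\<beta>, OF assms \<beta>] by blast
  have XN: "(real i0, real j0) \<in> ?N" using X by (simp add: np_vertices_def extreme_point_of_def)
  have "\<alpha> * i0 + \<beta> * j0 < K" using min[OF assms] \<open>\<not> K \<le> _\<close> by linarith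
  then have below: "real \<alpha> * real i0 + real \<beta> * real j0 < real K"
    by (metis of_nat_add of_nat_less_iff of_nat_mult)
  have "i0 \<le> \<gamma>" using last_max X by auto
  then consider "A < i0 \<and> i0 < \<gamma>" | "i0 = \<gamma>" | "i0 \<le> A" by linarith
  then show False
  proof cases
    case 1
    then show False using between_no_vertex[OF X] by simp
  next
    case 2
    then have "real \<beta> * real j0 < real \<beta> * real d" using below K\<gamma> by simp
    then have "real j0 < real d" using \<beta> by simp
    then show False
      using newton_polygon_extreme_point_minimal[OF end_extreme XN] 2 by simp
  next
    case 3
    \<comment> \<open>The segment from the vertex to the end of the edge passes below the start of the edge.\<close>
    define t where "t = (real A - real i0) / (real \<gamma> - real i0)"
    have t: "0 \<le> t" "t < 1" using 3 A_less_\<gamma> unfolding t_def by (auto simp: field_simps)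
    define Y where "Y = (1 - t) *\<^sub>R (real i0, real j0) + t *\<^sub>R (real \<gamma>, real d)"
    have YN: "Y \<in> ?N" unfolding Y_def
      using convex_convex_hull XN end_extreme t unfolding newton_polygon_def extreme_point_of_def
      by (intro convexD) auto
    have "t * (real \<gamma> - real i0) = real A - real i0" using 3 A_less_\<gamma> unfolding t_def by simp
    then have fY: "fst Y = real A" unfolding Y_def by (simp add: algebra_simps)
    have "real \<alpha> * fst Y + real \<beta> * snd Y
        = (1 - t) * (real \<alpha> * real i0 + real \<beta> * real j0) + t * (real \<alpha> * real \<gamma> + real \<beta> * real d)"
      unfolding Y_def by (simp add: algebra_simps)
    also have "\<dots> < (1 - t) * real K + t * real K"
      unfolding K\<gamma> using below t by simp
    finally have "real \<beta> * snd Y < real \<beta> * real B"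
      using fY KA by (simp add: algebra_simps)
    then have "snd Y < real B" using \<beta> by simp
    then show False
      using newton_polygon_extreme_point_minimal[OF start_extreme YN] fY by auto
  qed
qed

lemma edge_range:
  assumes "c k l \<noteq> 0" and "(B - d) * k + (\<gamma> - A) * l = (B - d) * A + (\<gamma> - A) * B"
  shows "A \<le> k \<and> k \<le> \<gamma>"
proof (rule ccontr)
  define \<alpha> \<beta> K where "\<alpha> = B - d" and "\<beta> = \<gamma> - A" and "K = (B - d) * A + (\<gamma> - A) * B"
  have \<beta>: "real \<beta> \<noteq> 0" using A_less_\<gamma> unfolding \<beta>_def by simp
  have "real K = real (\<alpha> * \<gamma> + \<beta> * d)" "real K = real (\<alpha> * k + \<beta> * l)"
    unfolding \<alpha>_def \<beta>_def K_def edge_level assms(2) by simp_all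
  then have lines: "real \<alpha> * real A + real \<beta> * real B = real K"
    "real \<alpha> * real \<gamma> + real \<beta> * real d = real K"
    "real \<alpha> * real k + real \<beta> * real l = real K"
    unfolding \<alpha>_def \<beta>_def K_def by simp_all
  have QN: "(real k, real l) \<in> newton_polygon c" using assms(1) by (rule coeff_in_newton_polygon)
  have PN: "(real A, real B) \<in> newton_polygon c" and VN: "(real \<gamma>, real d) \<in> newton_polygon c"
    using start_extreme end_extreme by (auto simp: extreme_point_of_def)
  assume "\<not> (A \<le> k \<and> k \<le> \<gamma>)"
  then consider "k < A" | "\<gamma> < k" by linarith
  then show False
  proof cases
    case 1
    show False using extreme_point_not_between[OF start_extreme QN VN \<beta>, of "real \<alpha>" "real K"] lines 1 A_less_\<gamma> by simp
  next
    case 2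
    show False using extreme_point_not_between[OF end_extreme PN QN \<beta>, of "real \<alpha>" "real K"] lines 2 A_less_\<gamma> by simp
  qed
qed

lemma support_height:
  assumes "c k l \<noteq> 0"
  shows "d \<le> l"
proof (rule ccontr)
  assume "\<not> d \<le> l"
  obtain i0 j0 where X: "(real i0, real j0) \<in> np_vertices c"
    and min: "\<And>k l. c k l \<noteq> 0 \<Longrightarrow> 0 * i0 + 1 * j0 \<le> 0 * k + 1 * l"
    using minimal_level_vertex[where c=c and \<alpha>=0 and \<beta>=1, OF assms] by auto
  obtain i j where ij: "(real i0, real j0) = (real i, real j)" "c i j \<noteq> 0"
    using vertex_coeff_nonzero[OF X] by blast
  have "i0 \<le> \<gamma>" using last_max X by auto
  moreover have "j0 < d" using min[OF assms] \<open>\<not> d \<le> l\<close> by simp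
  ultimately have "(B - d) * i0 + (\<gamma> - A) * j0 < (B - d) * \<gamma> + (\<gamma> - A) * d"
    using A_less_\<gamma> by (intro add_le_less_mono mult_left_mono mult_strict_left_mono) auto
  then show False using support_above_edge[OF ij(2)] ij(1) edge_level by simp
qed

lemma last_edge_supported: "edge_supported (B - d) (\<gamma> - A) c ((B - d) * A + (\<gamma> - A) * B) A \<gamma>"
  unfolding edge_supported_def using support_above_edge edge_range by simp

end

section \<open>Formal double power series\<close>

definition ser_mult ::
    "(nat \<Rightarrow> nat \<Rightarrow> complex) \<Rightarrow> (nat \<Rightarrow> nat \<Rightarrow> complex) \<Rightarrow> nat \<Rightarrow> nat \<Rightarrow> complex" where
  "ser_mult f g k l = (\<Sum>i\<le>k. \<Sum>j\<le>l. f i j * g (k - i) (l - j))"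

definition ser_monom :: "nat \<Rightarrow> nat \<Rightarrow> nat \<Rightarrow> nat \<Rightarrow> complex" where
  "ser_monom i0 j0 i j = (if i = i0 \<and> j = j0 then 1 else 0)"

primrec ser_pow :: "(nat \<Rightarrow> nat \<Rightarrow> complex) \<Rightarrow> nat \<Rightarrow> nat \<Rightarrow> nat \<Rightarrow> complex" where
  "ser_pow f 0 = ser_monom 0 0"
| "ser_pow f (Suc n) = ser_mult f (ser_pow f n)"

text \<open>Coefficients of \<open>b(P, R)\<close>; the \<open>infsum\<close> is meaningful only when \<open>P\<close> and \<open>R\<close> have no
  constant term, the only case used.\<close>
definition ser_comp ::
    "(nat \<Rightarrow> nat \<Rightarrow> complex) \<Rightarrow> (nat \<Rightarrow> nat \<Rightarrow> complex) \<Rightarrow> (nat \<Rightarrow> nat \<Rightarrow> complex) \<Rightarrow> nat \<Rightarrow> nat \<Rightarrow> complex" where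
  "ser_comp b P R k l = infsum (\<lambda>(i,j). b i j * ser_mult (ser_pow P i) (ser_pow R j) k l) UNIV"

lemma sum_single_support:
  assumes "finite S" "a \<in> S" "\<And>x. x \<in> S \<Longrightarrow> x \<noteq> a \<Longrightarrow> f x = 0"
  shows "sum f S = f a"
  using sum.remove[OF assms(1,2), of f] sum.neutral[of "S - {a}" f] assms(3) by simp

lemma ser_mult_nonzero:
  assumes "ser_mult f g k l \<noteq> 0"
  obtains i j where "i \<le> k" "j \<le> l" "f i j \<noteq> 0" "g (k - i) (l - j) \<noteq> 0"
proof -
  obtain i where i: "i \<le> k" "(\<Sum>j\<le>l. f i j * g (k - i) (l - j)) \<noteq> 0"
    using assms unfolding ser_mult_def by (meson atMost_iff sum.not_neutral_contains_not_neutral)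
  obtain j where "j \<le> l" "f i j * g (k - i) (l - j) \<noteq> 0"
    using i(2) by (meson atMost_iff sum.not_neutral_contains_not_neutral)
  then show ?thesis using that i(1) by simp
qed

lemma ser_pow_00: "ser_pow f n 0 0 = f 0 0 ^ n"
  by (induction n) (auto simp: ser_mult_def ser_monom_def)

lemma ser_comp_00:
  assumes "P 0 0 = 0" "R 0 0 = 0"
  shows "ser_comp b P R 0 0 = b 0 0"
proof -
  have "ser_comp b P R 0 0 = infsum (\<lambda>(i,j). b i j * ser_mult (ser_pow P i) (ser_pow R j) 0 0) {(0,0)}"
    unfolding ser_comp_def
    by (rule infsum_cong_neutral) (use assms in \<open>auto simp: ser_mult_def ser_pow_00\<close>)
  then show ?thesis by (simp add: ser_mult_def ser_monom_def)
qed

lemma edge_supported_mult: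
  assumes f: "edge_supported \<alpha> \<beta> f L1 a1 b1" and g: "edge_supported \<alpha> \<beta> g L2 a2 b2"
  shows "edge_supported \<alpha> \<beta> (ser_mult f g) (L1 + L2) (a1 + a2) (b1 + b2)"
  unfolding edge_supported_def
proof (intro allI impI)
  fix k l assume "ser_mult f g k l \<noteq> 0"
  then obtain i j where ij: "i \<le> k" "j \<le> l" "f i j \<noteq> 0" "g (k - i) (l - j) \<noteq> 0"
    by (rule ser_mult_nonzero)
  have F: "L1 \<le> \<alpha> * i + \<beta> * j" "\<alpha> * i + \<beta> * j = L1 \<longrightarrow> a1 \<le> i \<and> i \<le> b1"
    using f ij(3) unfolding edge_supported_def by auto
  have G: "L2 \<le> \<alpha> * (k - i) + \<beta> * (l - j)"
    "\<alpha> * (k - i) + \<beta> * (l - j) = L2 \<longrightarrow> a2 \<le> k - i \<and> k - i \<le> b2"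
    using g ij(4) unfolding edge_supported_def by auto
  obtain k' l' where "k = i + k'" "l = j + l'" using ij(1,2) le_Suc_ex by blast
  then have split: "\<alpha> * k + \<beta> * l = (\<alpha> * i + \<beta> * j) + (\<alpha> * (k - i) + \<beta> * (l - j))"
    by (simp add: algebra_simps)
  show "L1 + L2 \<le> \<alpha> * k + \<beta> * l \<and> (\<alpha> * k + \<beta> * l = L1 + L2 \<longrightarrow> a1 + a2 \<le> k \<and> k \<le> b1 + b2)"
  proof (intro conjI impI)
    show "L1 + L2 \<le> \<alpha> * k + \<beta> * l" using split F(1) G(1) by linarith
  next
    assume "\<alpha> * k + \<beta> * l = L1 + L2"
    then have "\<alpha> * i + \<beta> * j = L1" "\<alpha> * (k - i) + \<beta> * (l - j) = L2" using split F(1) G(1) by linarith+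
    then show "a1 + a2 \<le> k" "k \<le> b1 + b2" using F(2) G(2) ij(1) by auto
  qed
qed

lemma ser_mult_edge_end:
  assumes f: "edge_supported \<alpha> \<beta> f L1 a1 b1" and g: "edge_supported \<alpha> \<beta> g L2 a2 b2" and "\<beta> > 0"
    and p1: "\<alpha> * x1 + \<beta> * y1 = L1" and p2: "\<alpha> * x2 + \<beta> * y2 = L2"
    and ends: "(x1 = a1 \<and> x2 = a2) \<or> (x1 = b1 \<and> x2 = b2)"
  shows "ser_mult f g (x1 + x2) (y1 + y2) = f x1 y1 * g x2 y2"
proof -
  have zero: "f i j * g (x1 + x2 - i) (y1 + y2 - j) = 0"
    if ij: "i \<le> x1 + x2" "j \<le> y1 + y2" "(i,j) \<noteq> (x1,y1)" for i j
  proof (rule ccontr)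
    assume "f i j * g (x1 + x2 - i) (y1 + y2 - j) \<noteq> 0"
    have F: "L1 \<le> \<alpha> * i + \<beta> * j" "\<alpha> * i + \<beta> * j = L1 \<longrightarrow> a1 \<le> i \<and> i \<le> b1"
      using f \<open>f i j * _ \<noteq> 0\<close> unfolding edge_supported_def by auto
    have G: "L2 \<le> \<alpha> * (x1 + x2 - i) + \<beta> * (y1 + y2 - j)"
      "\<alpha> * (x1 + x2 - i) + \<beta> * (y1 + y2 - j) = L2 \<longrightarrow> a2 \<le> x1 + x2 - i \<and> x1 + x2 - i \<le> b2"
      using g \<open>f i j * _ \<noteq> 0\<close> unfolding edge_supported_def by auto
    obtain k' l' where "x1 + x2 = i + k'" "y1 + y2 = j + l'" using ij(1,2) le_Suc_ex by blast
    then have "\<alpha> * (x1 + x2) + \<beta> * (y1 + y2) = (\<alpha> * i + \<beta> * j) + (\<alpha> * (x1 + x2 - i) + \<beta> * (y1 + y2 - j))"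
      by (simp add: algebra_simps)
    moreover have "\<alpha> * (x1 + x2) + \<beta> * (y1 + y2) = L1 + L2" using p1 p2 by (simp add: algebra_simps)
    ultimately have l1: "\<alpha> * i + \<beta> * j = L1" and "\<alpha> * (x1 + x2 - i) + \<beta> * (y1 + y2 - j) = L2"
      using F(1) G(1) by linarith+
    then have "i = x1" using F(2) G(2) ends ij(1) by auto
    then have "\<alpha> * x1 + \<beta> * j = L1" using l1 by simp
    then have "\<beta> * j = \<beta> * y1" using p1 by linarith
    then have "j = y1" using \<open>\<beta> > 0\<close> by simp
    then show False using \<open>i = x1\<close> ij(3) by simp
  qed
  have "ser_mult f g (x1 + x2) (y1 + y2) = (\<Sum>j\<le>y1 + y2. f x1 j * g (x1 + x2 - x1) (y1 + y2 - j))"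
    unfolding ser_mult_def by (rule sum_single_support) (auto intro!: sum.neutral zero)
  also have "\<dots> = f x1 y1 * g (x1 + x2 - x1) (y1 + y2 - y1)"
    by (rule sum_single_support) (use zero[of x1] in auto)
  finally show ?thesis by simp
qed

lemma edge_supported_pow:
  assumes "edge_supported \<alpha> \<beta> f L a b"
  shows "edge_supported \<alpha> \<beta> (ser_pow f n) (n * L) (n * a) (n * b)"
proof (induction n)
  case 0
  then show ?case by (simp add: edge_supported_def ser_monom_def)
next
  case (Suc n)
  then show ?case using edge_supported_mult[OF assms Suc] by simp
qed

lemma ser_pow_edge_end:
  assumes f: "edge_supported \<alpha> \<beta> f L a b" and "\<beta> > 0" and p: "\<alpha> * x + \<beta> * y = L"
    and "x = a \<or> x = b"
  shows "ser_pow f n (n * x) (n * y) = f x y ^ n"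
proof (induction n)
  case 0
  then show ?case by (simp add: ser_monom_def)
next
  case (Suc n)
  have "ser_pow f (Suc n) (Suc n * x) (Suc n * y) = ser_mult f (ser_pow f n) (x + n * x) (y + n * y)"
    by simp
  also have "\<dots> = f x y * ser_pow f n (n * x) (n * y)"
    by (rule ser_mult_edge_end[OF f edge_supported_pow[OF f] \<open>\<beta> > 0\<close> p])
       (use p assms(4) in \<open>auto simp: algebra_simps simp flip: p\<close>)
  finally show ?case using Suc by simp
qed

lemma edge_supported_comp:
  assumes P: "edge_supported \<alpha> \<beta> P LP aP bP" and R: "edge_supported \<alpha> \<beta> R LR aR bR"
    and b: "\<And>i j. b i j \<noteq> 0 \<Longrightarrow>
      M \<le> i * LP + j * LR \<and> (i * LP + j * LR = M \<longrightarrow> lo \<le> i * aP + j * aR \<and> i * bP + j * bR \<le> hi)"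
  shows "edge_supported \<alpha> \<beta> (ser_comp b P R) M lo hi"
  unfolding edge_supported_def
proof (intro allI impI)
  fix k l assume "ser_comp b P R k l \<noteq> 0"
  then obtain i j where nz: "b i j \<noteq> 0" "ser_mult (ser_pow P i) (ser_pow R j) k l \<noteq> 0"
    unfolding ser_comp_def by (metis (mono_tags, lifting) case_prod_conv infsum_0 mult_eq_0_iff surj_pair)
  have "edge_supported \<alpha> \<beta> (ser_mult (ser_pow P i) (ser_pow R j)) (i * LP + j * LR) (i * aP + j * aR) (i * bP + j * bR)"
    by (rule edge_supported_mult[OF edge_supported_pow[OF P] edge_supported_pow[OF R]])
  then have T: "i * LP + j * LR \<le> \<alpha> * k + \<beta> * l"
    "\<alpha> * k + \<beta> * l = i * LP + j * LR \<longrightarrow> i * aP + j * aR \<le> k \<and> k \<le> i * bP + j * bR"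
    using nz(2) unfolding edge_supported_def by blast+
  have B: "M \<le> i * LP + j * LR" "i * LP + j * LR = M \<longrightarrow> lo \<le> i * aP + j * aR \<and> i * bP + j * bR \<le> hi"
    using b[OF nz(1)] by auto
  show "M \<le> \<alpha> * k + \<beta> * l \<and> (\<alpha> * k + \<beta> * l = M \<longrightarrow> lo \<le> k \<and> k \<le> hi)"
  proof (intro conjI impI)
    show "M \<le> \<alpha> * k + \<beta> * l" using T(1) B(1) by linarith
  next
    assume "\<alpha> * k + \<beta> * l = M"
    then have "i * LP + j * LR = M" using T(1) B(1) by linarith
    then show "lo \<le> k" "k \<le> hi" using T(2) B(2) \<open>\<alpha> * k + \<beta> * l = M\<close> by auto
  qed
qed

lemma ser_comp_edge_end:
  assumes P: "edge_supported \<alpha> \<beta> P LP aP bP" and R: "edge_supported \<alpha> \<beta> R LR aR bR" and "\<beta> > 0"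
    and pP: "\<alpha> * xP + \<beta> * yP = LP" and pR: "\<alpha> * xR + \<beta> * yR = LR"
    and above: "\<And>i j. b i j \<noteq> 0 \<Longrightarrow> M \<le> i * LP + j * LR"
    and level: "i0 * LP + j0 * LR = M"
    and ends: "(xP = aP \<and> xR = aR) \<or> (xP = bP \<and> xR = bR)"
    and isolated: "\<And>i j. b i j \<noteq> 0 \<Longrightarrow> i * LP + j * LR = M \<Longrightarrow> (i,j) \<noteq> (i0,j0) \<Longrightarrow>
      \<not> (i * aP + j * aR \<le> i0 * xP + j0 * xR \<and> i0 * xP + j0 * xR \<le> i * bP + j * bR)"
  shows "ser_comp b P R (i0 * xP + j0 * xR) (i0 * yP + j0 * yR) = b i0 j0 * P xP yP ^ i0 * R xR yR ^ j0"
proof -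
  let ?k = "i0 * xP + j0 * xR" and ?l = "i0 * yP + j0 * yR"
  have lev: "\<alpha> * ?k + \<beta> * ?l = M" using pP pR level by (simp add: algebra_simps flip: level pP pR)
  have zero: "b i j * ser_mult (ser_pow P i) (ser_pow R j) ?k ?l = 0" if "(i,j) \<noteq> (i0,j0)" for i j
  proof (rule ccontr)
    assume "b i j * ser_mult (ser_pow P i) (ser_pow R j) ?k ?l \<noteq> 0"
    then have nz: "b i j \<noteq> 0" "ser_mult (ser_pow P i) (ser_pow R j) ?k ?l \<noteq> 0" by auto
    have "edge_supported \<alpha> \<beta> (ser_mult (ser_pow P i) (ser_pow R j)) (i * LP + j * LR) (i * aP + j * aR) (i * bP + j * bR)"
      by (rule edge_supported_mult[OF edge_supported_pow[OF P] edge_supported_pow[OF R]])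
    then have T: "i * LP + j * LR \<le> \<alpha> * ?k + \<beta> * ?l"
      "\<alpha> * ?k + \<beta> * ?l = i * LP + j * LR \<longrightarrow> i * aP + j * aR \<le> ?k \<and> ?k \<le> i * bP + j * bR"
      using nz(2) unfolding edge_supported_def by blast+
    have "i * LP + j * LR = M" using T(1) above[OF nz(1)] lev by linarith
    then show False using isolated[OF nz(1) _ that] T(2) lev by simp
  qed
  have "ser_comp b P R ?k ?l = infsum (\<lambda>(i,j). b i j * ser_mult (ser_pow P i) (ser_pow R j) ?k ?l) {(i0,j0)}"
    unfolding ser_comp_def
  proof (rule infsum_cong_neutral)
    fix x :: "nat \<times> nat" assume "x \<in> UNIV - {(i0,j0)}"
    then show "(case x of (i,j) \<Rightarrow> b i j * ser_mult (ser_pow P i) (ser_pow R j) ?k ?l) = 0"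
      using zero by (cases x) auto
  qed auto
  also have "\<dots> = b i0 j0 * (ser_pow P i0 (i0 * xP) (i0 * yP) * ser_pow R j0 (j0 * xR) (j0 * yR))"
  proof -
    have "ser_mult (ser_pow P i0) (ser_pow R j0) ?k ?l = ser_pow P i0 (i0 * xP) (i0 * yP) * ser_pow R j0 (j0 * xR) (j0 * yR)"
    proof (rule ser_mult_edge_end[OF edge_supported_pow[OF P] edge_supported_pow[OF R] \<open>\<beta> > 0\<close>])
      show "\<alpha> * (i0 * xP) + \<beta> * (i0 * yP) = i0 * LP" by (simp add: algebra_simps flip: pP)
      show "\<alpha> * (j0 * xR) + \<beta> * (j0 * yR) = j0 * LR" by (simp add: algebra_simps flip: pR)
      show "i0 * xP = i0 * aP \<and> j0 * xR = j0 * aR \<or> i0 * xP = i0 * bP \<and> j0 * xR = j0 * bR"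
        using ends by auto
    qed
    then show ?thesis by simp
  qed
  also have "\<dots> = b i0 j0 * P xP yP ^ i0 * R xR yR ^ j0"
    using ser_pow_edge_end[OF P \<open>\<beta> > 0\<close> pP, of i0] ser_pow_edge_end[OF R \<open>\<beta> > 0\<close> pR, of j0] ends
    by auto
  finally show ?thesis .
qed

section \<open>Convergent double power series\<close>

definition ser_abs_summable :: "(nat \<Rightarrow> nat \<Rightarrow> complex) \<Rightarrow> real \<Rightarrow> bool" where
  "ser_abs_summable f r \<longleftrightarrow> (\<lambda>(i,j). norm (f i j) * r ^ (i + j)) summable_on UNIV"

definition ser_norm :: "(nat \<Rightarrow> nat \<Rightarrow> complex) \<Rightarrow> real \<Rightarrow> real" where
  "ser_norm f r = infsum (\<lambda>(i,j). norm (f i j) * r ^ (i + j)) UNIV"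

definition ser_eval :: "(nat \<Rightarrow> nat \<Rightarrow> complex) \<Rightarrow> complex \<Rightarrow> complex \<Rightarrow> complex" where
  "ser_eval f z w = infsum (\<lambda>(i,j). f i j * z ^ i * w ^ j) UNIV"

lemma has_sum_ser_norm:
  "ser_abs_summable f r \<Longrightarrow> ((\<lambda>(i,j). norm (f i j) * r ^ (i + j)) has_sum ser_norm f r) UNIV"
  unfolding ser_abs_summable_def ser_norm_def by simp

lemma ser_norm_nonneg: "r \<ge> 0 \<Longrightarrow> ser_norm f r \<ge> 0"
  unfolding ser_norm_def by (intro infsum_nonneg) auto

lemma norm_ser_term_le:
  fixes f :: "nat \<Rightarrow> nat \<Rightarrow> complex"
  assumes "norm z \<le> r" "norm w \<le> r"
  shows "norm (f i j * z ^ i * w ^ j) \<le> norm (f i j) * r ^ (i + j)"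
proof -
  have "norm (f i j * z ^ i * w ^ j) = norm (f i j) * (norm z ^ i * norm w ^ j)"
    by (simp add: norm_mult norm_power mult.assoc)
  also have "\<dots> \<le> norm (f i j) * (r ^ i * r ^ j)"
    using assms norm_ge_zero[of z] order_trans[OF norm_ge_zero assms(1)]
    by (intro mult_left_mono mult_mono power_mono) auto
  finally show ?thesis by (simp add: power_add)
qed

lemma ser_abs_summable_eval:
  assumes "ser_abs_summable f r" "norm z \<le> r" "norm w \<le> r"
  shows "(\<lambda>(i,j). norm (f i j * z ^ i * w ^ j)) summable_on UNIV"
    and "((\<lambda>(i,j). f i j * z ^ i * w ^ j) has_sum ser_eval f z w) UNIV"
    and "norm (ser_eval f z w) \<le> ser_norm f r"
proof -
  have abs: "(\<lambda>x. norm ((\<lambda>(i,j). f i j * z ^ i * w ^ j) x)) summable_on UNIV"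
    by (rule Infinite_Sum.abs_summable_on_comparison_test'[OF assms(1)[unfolded ser_abs_summable_def]])
       (use norm_ser_term_le[OF assms(2,3)] in auto)
  then show "(\<lambda>(i,j). norm (f i j * z ^ i * w ^ j)) summable_on UNIV"
    by (simp add: case_prod_unfold)
  have s: "(\<lambda>(i,j). f i j * z ^ i * w ^ j) summable_on UNIV"
    using abs by (rule abs_summable_summable)
  then show "((\<lambda>(i,j). f i j * z ^ i * w ^ j) has_sum ser_eval f z w) UNIV"
    unfolding ser_eval_def by simp
  show "norm (ser_eval f z w) \<le> ser_norm f r"
    unfolding ser_eval_def ser_norm_def
    by (rule norm_infsum_le[OF has_sum_infsum[OF s] has_sum_ser_norm[OF assms(1), unfolded ser_norm_def]])
       (use norm_ser_term_le[OF assms(2,3)] in auto)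
qed

lemmas has_sum_ser_eval = ser_abs_summable_eval(2)

lemma ser_abs_summable_mono:
  assumes "ser_abs_summable f r1" "0 \<le> r" "r \<le> r1"
  shows "ser_abs_summable f r" and "ser_norm f r \<le> ser_norm f r1"
proof -
  have le: "norm (f i j) * r ^ (i + j) \<le> norm (f i j) * r1 ^ (i + j)" for i j
    using assms(2,3) by (intro mult_left_mono power_mono) auto
  have "(\<lambda>x. norm ((\<lambda>(i,j). norm (f i j) * r ^ (i + j)) x)) summable_on UNIV"
    by (rule Infinite_Sum.abs_summable_on_comparison_test'[OF assms(1)[unfolded ser_abs_summable_def]])
       (use le assms(2) in auto)
  then show S: "ser_abs_summable f r"
    unfolding ser_abs_summable_def using assms(2) by (simp add: case_prod_unfold)
  show "ser_norm f r \<le> ser_norm f r1"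
    unfolding ser_norm_def
    by (rule infsum_mono[OF S[unfolded ser_abs_summable_def] assms(1)[unfolded ser_abs_summable_def]])
       (use le in auto)
qed

lemma ser_norm_small:
  assumes f: "ser_abs_summable f r1" and f00: "f 0 0 = 0" and r: "0 \<le> r" "r \<le> r1"
  shows "ser_norm f r \<le> (r / r1) * ser_norm f r1"
proof -
  have le: "norm (f i j) * r ^ (i + j) \<le> (r / r1) * (norm (f i j) * r1 ^ (i + j))" for i j
  proof (cases "i + j = 0")
    case True
    then show ?thesis using f00 by simp
  next
    case False
    have "r1 > 0 \<or> r = 0" using r by auto
    then have "r ^ (i + j) \<le> (r / r1) * r1 ^ (i + j)"
    proof
      assume "r1 > 0"
      have "(r / r1) ^ (i + j) \<le> (r / r1) ^ 1"
        by (rule power_decreasing) (use False r \<open>r1 > 0\<close> in auto)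
      then have "(r / r1) ^ (i + j) * r1 ^ (i + j) \<le> (r / r1) * r1 ^ (i + j)"
        using \<open>r1 > 0\<close> by (intro mult_right_mono) auto
      then show ?thesis using \<open>r1 > 0\<close> by (simp add: power_divide)
    qed (use False in \<open>auto simp: power_0_left\<close>)
    then show ?thesis by (metis mult.left_commute mult_left_mono norm_ge_zero)
  qed
  have "ser_norm f r \<le> infsum (\<lambda>x. (r / r1) * (\<lambda>(i,j). norm (f i j) * r1 ^ (i + j)) x) UNIV"
    unfolding ser_norm_def
    by (rule infsum_mono[OF ser_abs_summable_mono(1)[OF f r, unfolded ser_abs_summable_def]
          summable_on_cmult_right[OF f[unfolded ser_abs_summable_def]]]) (use le in auto)
  also have "\<dots> = (r / r1) * ser_norm f r1"
    unfolding ser_norm_def by (rule infsum_cmult_right')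
  finally show ?thesis .
qed

lemma has_sum_cauchy_regroup:
  fixes F :: "(nat \<times> nat) \<times> (nat \<times> nat) \<Rightarrow> 'a::{topological_comm_monoid_add,t3_space}"
  assumes "(F has_sum S) UNIV"
  shows "((\<lambda>(m,n). \<Sum>i\<le>m. \<Sum>j\<le>n. F ((i,j),(m-i,n-j))) has_sum S) UNIV"
proof -
  define h :: "(nat \<times> nat) \<times> (nat \<times> nat) \<Rightarrow> (nat \<times> nat) \<times> (nat \<times> nat)"
    where "h = (\<lambda>((m,n),(i,j)). ((i,j),(m-i,n-j)))"
  define h' :: "(nat \<times> nat) \<times> (nat \<times> nat) \<Rightarrow> (nat \<times> nat) \<times> (nat \<times> nat)"
    where "h' = (\<lambda>((i,j),(k,l)). ((i+k,j+l),(i,j)))"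
  let ?S = "Sigma UNIV (\<lambda>(m,n). {..m} \<times> {..n})"
  have bij: "bij_betw h ?S UNIV"
    by (rule bij_betw_byWitness[where f'=h']) (auto simp: h_def h'_def)
  have "((\<lambda>x. F (h x)) has_sum S) ?S"
    using has_sum_reindex_bij_betw[OF bij, of F S] assms by simp
  then show ?thesis
  proof (rule has_sum_SigmaD)
    fix x :: "nat \<times> nat" assume "x \<in> UNIV"
    obtain m n where x: "x = (m,n)" by (cases x)
    have eq: "(\<Sum>y\<in>{..m} \<times> {..n}. F (h (x,y))) = (\<Sum>i\<le>m. \<Sum>j\<le>n. F ((i,j),(m-i,n-j)))"
      unfolding x h_def by (simp add: sum.cartesian_product case_prod_unfold)
    have "((\<lambda>y. F (h (x, y))) has_sum (\<Sum>y\<in>{..m} \<times> {..n}. F (h (x,y)))) ({..m} \<times> {..n})"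
      by (rule has_sum_finite) simp
    then have "((\<lambda>y. F (h (x, y))) has_sum (\<Sum>i\<le>m. \<Sum>j\<le>n. F ((i,j),(m-i,n-j)))) ({..m} \<times> {..n})"
      by (simp only: eq)
    then show "((\<lambda>y. F (h (x, y))) has_sum (case x of (m,n) \<Rightarrow> \<Sum>i\<le>m. \<Sum>j\<le>n. F ((i,j),(m-i,n-j)))) (case x of (m,n) \<Rightarrow> {..m} \<times> {..n})"
      unfolding x by (simp only: prod.case)
  qed
qed

lemma has_sum_product:
  fixes f :: "'b \<Rightarrow> 'a::{real_normed_div_algebra, banach}" and g :: "'c \<Rightarrow> 'a"
  assumes f: "(f has_sum a) A" and g: "(g has_sum b) B"
    and nf: "(\<lambda>x. norm (f x)) summable_on A" and ng: "(\<lambda>y. norm (g y)) summable_on B"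
  shows "((\<lambda>(x,y). f x * g y) has_sum a * b) (A \<times> B)"
proof -
  have ns: "(\<lambda>(x,y). norm (f x) * norm (g y)) summable_on Sigma A (\<lambda>_. B)"
  proof (rule summable_on_SigmaI)
    fix x assume "x \<in> A"
    show "((\<lambda>y. case (x, y) of (x, y) \<Rightarrow> norm (f x) * norm (g y)) has_sum norm (f x) * infsum (\<lambda>y. norm (g y)) B) B"
      using has_sum_cmult_right[OF has_sum_infsum[OF ng], of "norm (f x)"] by simp
  next
    show "(\<lambda>x. norm (f x) * infsum (\<lambda>y. norm (g y)) B) summable_on A"
      using summable_on_cmult_left[OF nf] by simp
  qed auto
  have s: "(\<lambda>(x,y). f x * g y) summable_on Sigma A (\<lambda>_. B)"
  proof (rule abs_summable_summable)
    show "(\<lambda>p. norm (case p of (x, y) \<Rightarrow> f x * g y)) summable_on Sigma A (\<lambda>_. B)"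
      using ns by (simp add: case_prod_unfold norm_mult)
  qed
  have "((\<lambda>(x,y). f x * g y) has_sum a * b) (Sigma A (\<lambda>_. B))"
  proof (rule has_sum_SigmaI[where g="\<lambda>x. f x * b"])
    fix x assume "x \<in> A"
    show "((\<lambda>y. case (x, y) of (x, y) \<Rightarrow> f x * g y) has_sum f x * b) B"
      using has_sum_cmult_right[OF g, of "f x"] by simp
  next
    show "((\<lambda>x. f x * b) has_sum a * b) A" by (rule has_sum_cmult_left[OF f])
  qed (rule s)
  then show ?thesis by simp
qed

lemma ser_mult_weighted_bound:
  assumes "r \<ge> 0"
  shows "norm (ser_mult f g m n) * r ^ (m + n)
    \<le> (\<Sum>i\<le>m. \<Sum>j\<le>n. (norm (f i j) * r ^ (i + j)) * (norm (g (m-i) (n-j)) * r ^ ((m-i) + (n-j))))"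
proof -
  have "norm (ser_mult f g m n) \<le> (\<Sum>i\<le>m. \<Sum>j\<le>n. norm (f i j) * norm (g (m-i) (n-j)))"
    unfolding ser_mult_def
    by (rule order.trans[OF norm_sum sum_mono], rule order.trans[OF norm_sum sum_mono]) (simp add: norm_mult)
  then have "norm (ser_mult f g m n) * r ^ (m + n)
      \<le> (\<Sum>i\<le>m. \<Sum>j\<le>n. norm (f i j) * norm (g (m-i) (n-j))) * r ^ (m + n)"
    using assms by (intro mult_right_mono) auto
  also have "\<dots> = (\<Sum>i\<le>m. \<Sum>j\<le>n. (norm (f i j) * r ^ (i + j)) * (norm (g (m-i) (n-j)) * r ^ ((m-i) + (n-j))))"
    unfolding sum_distrib_right
  proof (intro sum.cong refl)
    fix i j assume "i \<in> {..m}" "j \<in> {..n}"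
    then have "r ^ (m + n) = r ^ (i + j) * r ^ ((m-i) + (n-j))" by (simp flip: power_add)
    then show "norm (f i j) * norm (g (m-i) (n-j)) * r ^ (m + n)
        = (norm (f i j) * r ^ (i + j)) * (norm (g (m-i) (n-j)) * r ^ ((m-i) + (n-j)))"
      by (simp add: algebra_simps)
  qed
  finally show ?thesis .
qed

lemma ser_abs_summable_mult:
  assumes f: "ser_abs_summable f r" and g: "ser_abs_summable g r" and r: "r \<ge> 0"
  shows "ser_abs_summable (ser_mult f g) r" "ser_norm (ser_mult f g) r \<le> ser_norm f r * ser_norm g r"
proof -
  let ?F = "\<lambda>(x,y). (case x of (i,j) \<Rightarrow> norm (f i j) * r ^ (i + j)) * (case y of (k,l) \<Rightarrow> norm (g k l) * r ^ (k + l))"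
  have "(?F has_sum ser_norm f r * ser_norm g r) (UNIV \<times> UNIV)"
    by (rule has_sum_product[OF has_sum_ser_norm[OF f] has_sum_ser_norm[OF g]])
       (use f g r in \<open>auto simp: ser_abs_summable_def case_prod_unfold\<close>)
  from has_sum_cauchy_regroup[OF this[simplified]]
  have G: "((\<lambda>(m,n). \<Sum>i\<le>m. \<Sum>j\<le>n. (norm (f i j) * r ^ (i + j)) * (norm (g (m-i) (n-j)) * r ^ ((m-i) + (n-j))))
      has_sum ser_norm f r * ser_norm g r) UNIV"
    by (simp only: prod.case)
  have bound: "norm ((\<lambda>(m,n). norm (ser_mult f g m n) * r ^ (m + n)) x)
      \<le> (\<lambda>(m,n). \<Sum>i\<le>m. \<Sum>j\<le>n. (norm (f i j) * r ^ (i + j)) * (norm (g (m-i) (n-j)) * r ^ ((m-i) + (n-j)))) x" for x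
    using ser_mult_weighted_bound[OF r, of f g] r by (cases x) auto
  have "(\<lambda>x. norm ((\<lambda>(m,n). norm (ser_mult f g m n) * r ^ (m + n)) x)) summable_on UNIV"
    by (rule Infinite_Sum.abs_summable_on_comparison_test'[OF has_sum_imp_summable[OF G]]) (rule bound)
  then have S: "(\<lambda>(m,n). norm (ser_mult f g m n) * r ^ (m + n)) summable_on UNIV"
    using r by (simp add: case_prod_unfold)
  then show "ser_abs_summable (ser_mult f g) r" unfolding ser_abs_summable_def .
  show "ser_norm (ser_mult f g) r \<le> ser_norm f r * ser_norm g r"
    unfolding ser_norm_def[of "ser_mult f g"]
    by (rule has_sum_mono[OF has_sum_infsum[OF S] G]) (use bound r in \<open>auto simp: case_prod_unfold\<close>)
qed

lemma ser_eval_mult: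
  assumes f: "ser_abs_summable f r" and g: "ser_abs_summable g r" and z: "norm z \<le> r" and w: "norm w \<le> r"
  shows "ser_eval (ser_mult f g) z w = ser_eval f z w * ser_eval g z w"
proof -
  let ?F = "\<lambda>(x,y). (case x of (i,j) \<Rightarrow> f i j * z ^ i * w ^ j) * (case y of (k,l) \<Rightarrow> g k l * z ^ k * w ^ l)"
  have "(?F has_sum ser_eval f z w * ser_eval g z w) (UNIV \<times> UNIV)"
    by (rule has_sum_product[OF has_sum_ser_eval[OF f z w] has_sum_ser_eval[OF g z w]])
       (use ser_abs_summable_eval(1)[OF f z w] ser_abs_summable_eval(1)[OF g z w] in \<open>auto simp: case_prod_unfold\<close>)
  from has_sum_cauchy_regroup[OF this[simplified]]
  have G: "((\<lambda>(m,n). \<Sum>i\<le>m. \<Sum>j\<le>n. (f i j * z ^ i * w ^ j) * (g (m-i) (n-j) * z ^ (m-i) * w ^ (n-j)))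
      has_sum ser_eval f z w * ser_eval g z w) UNIV"
    by (simp only: prod.case)
  have "(\<Sum>i\<le>m. \<Sum>j\<le>n. (f i j * z ^ i * w ^ j) * (g (m-i) (n-j) * z ^ (m-i) * w ^ (n-j)))
      = ser_mult f g m n * z ^ m * w ^ n" for m n
    unfolding ser_mult_def sum_distrib_right
  proof (intro sum.cong refl)
    fix i j assume "i \<in> {..m}" "j \<in> {..n}"
    then have "z ^ m = z ^ i * z ^ (m-i)" "w ^ n = w ^ j * w ^ (n-j)" by (simp_all flip: power_add)
    then show "(f i j * z ^ i * w ^ j) * (g (m-i) (n-j) * z ^ (m-i) * w ^ (n-j))
        = f i j * g (m-i) (n-j) * z ^ m * w ^ n"
      by (simp add: algebra_simps)
  qed
  then have "((\<lambda>(m,n). ser_mult f g m n * z ^ m * w ^ n) has_sum ser_eval f z w * ser_eval g z w) UNIV"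
    using G by simp
  then show ?thesis unfolding ser_eval_def by (simp add: infsumI)
qed

lemma has_sum_ser_monom:
  shows "((\<lambda>(i,j). ser_monom i0 j0 i j * z ^ i * w ^ j) has_sum z ^ i0 * w ^ j0) UNIV"
    and "((\<lambda>(i,j). norm (ser_monom i0 j0 i j) * r ^ (i + j)) has_sum r ^ (i0 + j0)) UNIV"
proof -
  have "((\<lambda>(i,j). ser_monom i0 j0 i j * z ^ i * w ^ j) has_sum z ^ i0 * w ^ j0) {(i0,j0)}"
    by (rule has_sum_finiteI) (simp_all add: ser_monom_def)
  then show "((\<lambda>(i,j). ser_monom i0 j0 i j * z ^ i * w ^ j) has_sum z ^ i0 * w ^ j0) UNIV"
    by (rule has_sum_cong_neutral[THEN iffD1, rotated -1]) (auto simp: ser_monom_def split: if_splits)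
  have "((\<lambda>(i,j). norm (ser_monom i0 j0 i j) * r ^ (i + j)) has_sum r ^ (i0 + j0)) {(i0,j0)}"
    by (rule has_sum_finiteI) (simp_all add: ser_monom_def)
  then show "((\<lambda>(i,j). norm (ser_monom i0 j0 i j) * r ^ (i + j)) has_sum r ^ (i0 + j0)) UNIV"
    by (rule has_sum_cong_neutral[THEN iffD1, rotated -1]) (auto simp: ser_monom_def split: if_splits)
qed

lemma ser_one:
  "ser_abs_summable (ser_monom 0 0) r" "ser_norm (ser_monom 0 0) r = 1" "ser_eval (ser_monom 0 0) z w = 1"
proof -
  have "((\<lambda>(i,j). norm (ser_monom 0 0 i j) * r ^ (i + j)) has_sum 1) UNIV"
    using has_sum_ser_monom(2)[of 0 0 r] by simp
  then show "ser_abs_summable (ser_monom 0 0) r" "ser_norm (ser_monom 0 0) r = 1"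
    unfolding ser_abs_summable_def ser_norm_def by (auto dest: has_sum_imp_summable infsumI)
  have "((\<lambda>(i,j). ser_monom 0 0 i j * z ^ i * w ^ j) has_sum 1) UNIV"
    using has_sum_ser_monom(1)[of 0 0 z w] by simp
  then show "ser_eval (ser_monom 0 0) z w = 1" unfolding ser_eval_def by (rule infsumI)
qed

lemma ser_pow_props:
  assumes f: "ser_abs_summable f r" and r: "r \<ge> 0"
  shows "ser_abs_summable (ser_pow f n) r \<and> ser_norm (ser_pow f n) r \<le> ser_norm f r ^ n \<and>
         (\<forall>z w. norm z \<le> r \<longrightarrow> norm w \<le> r \<longrightarrow> ser_eval (ser_pow f n) z w = ser_eval f z w ^ n)"
proof (induction n)
  case 0
  then show ?case using ser_one by simp
next
  case (Suc n)
  then have IH: "ser_abs_summable (ser_pow f n) r" "ser_norm (ser_pow f n) r \<le> ser_norm f r ^ n" by auto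
  have "ser_norm (ser_pow f (Suc n)) r \<le> ser_norm f r * ser_norm (ser_pow f n) r"
    using ser_abs_summable_mult(2)[OF f IH(1) r] by simp
  also have "\<dots> \<le> ser_norm f r * ser_norm f r ^ n"
    using IH(2) ser_norm_nonneg[OF r, of f] by (intro mult_left_mono) auto
  finally show ?case using ser_abs_summable_mult(1)[OF f IH(1) r] ser_eval_mult[OF f IH(1)] Suc by simp
qed

section \<open>Expansions of holomorphic germs\<close>

lemma has_expansion2_ser_eval:
  assumes "has_expansion2 c g"
  obtains r where "r > 0" "ser_abs_summable c r"
    "\<And>z w. norm z < r \<Longrightarrow> norm w < r \<Longrightarrow> g z w = ser_eval c z w"
proof -
  obtain r where r: "r > 0"
    and h: "\<And>z w. norm z < r \<Longrightarrow> norm w < r \<Longrightarrow> ((\<lambda>(i,j). c i j * z ^ i * w ^ j) has_sum g z w) UNIV"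
    using assms unfolding has_expansion2_def by blast
  define s where "s = r / 2"
  have s: "0 < s" "s < r" using r unfolding s_def by auto
  have "(\<lambda>(i,j). c i j * complex_of_real s ^ i * complex_of_real s ^ j) summable_on UNIV"
    using h[of "complex_of_real s" "complex_of_real s"] s by (auto intro: has_sum_imp_summable)
  then have "(\<lambda>x. norm ((\<lambda>(i,j). c i j * complex_of_real s ^ i * complex_of_real s ^ j) x)) summable_on UNIV"
    by (simp add: summable_on_iff_abs_summable_on_complex)
  then have "ser_abs_summable c s"
    unfolding ser_abs_summable_def using s
    by (simp add: case_prod_unfold norm_mult norm_power power_add mult.assoc)
  moreover have "g z w = ser_eval c z w" if "norm z < s" "norm w < s" for z w
    using h[of z w] that s unfolding ser_eval_def by (simp add: infsumI)
  ultimately show ?thesis using that s(1) by blast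
qed

lemma has_expansion2I:
  assumes "r > 0" "ser_abs_summable c r"
    and "\<And>z w. norm z < r \<Longrightarrow> norm w < r \<Longrightarrow> g z w = ser_eval c z w"
  shows "has_expansion2 c g"
  unfolding has_expansion2_def
proof (intro exI[of _ r] conjI allI impI)
  fix z w :: complex assume "norm z < r" "norm w < r"
  then show "((\<lambda>(i,j). c i j * z ^ i * w ^ j) has_sum g z w) UNIV"
    using has_sum_ser_eval[OF assms(2), of z w] assms(3) by simp
qed (rule assms(1))

lemma has_expansion2_monom: "has_expansion2 (ser_monom i0 j0) (\<lambda>z w. z ^ i0 * w ^ j0)"
  unfolding has_expansion2_def using has_sum_ser_monom(1) by (intro exI[of _ 1]) simp

lemma has_expansion2_in_z:
  assumes "has_expansion1 a p"
  shows "has_expansion2 (\<lambda>i j. if j = 0 then a i else 0) (\<lambda>z w. p z)"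
proof -
  obtain r where r: "r > 0" and h: "\<And>z. norm z < r \<Longrightarrow> ((\<lambda>k. a k * z ^ k) has_sum p z) UNIV"
    using assms unfolding has_expansion1_def by blast
  have "((\<lambda>(i,j). (if j = 0 then a i else 0) * z ^ i * w ^ j) has_sum p z) UNIV" if "norm z < r" for z w
  proof -
    have inj: "inj_on (\<lambda>k::nat. (k, 0::nat)) UNIV" by (auto simp: inj_on_def)
    have "(((\<lambda>(i,j). (if j = 0 then a i else 0) * z ^ i * w ^ j) \<circ> (\<lambda>k. (k, 0::nat))) has_sum p z) UNIV"
      using h[OF that] by (simp add: comp_def)
    then have "((\<lambda>(i,j). (if j = 0 then a i else 0) * z ^ i * w ^ j) has_sum p z) (range (\<lambda>k. (k, 0::nat)))"
      using has_sum_reindex[OF inj] by blast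
    then show ?thesis
      by (rule has_sum_cong_neutral[THEN iffD1, rotated -1]) (auto simp: image_iff)
  qed
  then show ?thesis unfolding has_expansion2_def using r by blast
qed

lemma ser_comp_radius:
  assumes P: "ser_abs_summable P r" and R: "ser_abs_summable R r" and "r > 0"
    and "P 0 0 = 0" "R 0 0 = 0" and "s > 0"
  obtains \<rho> where "0 < \<rho>" "\<rho> \<le> r" "ser_norm P \<rho> \<le> s" "ser_norm R \<rho> \<le> s"
proof -
  define M where "M = ser_norm P r + ser_norm R r + 1"
  have M: "M > 0" "ser_norm P r \<le> M" "ser_norm R r \<le> M"
    using ser_norm_nonneg[of r P] ser_norm_nonneg[of r R] \<open>r > 0\<close> unfolding M_def by auto
  define \<rho> where "\<rho> = r * min 1 (s / M)"
  have \<rho>: "0 < \<rho>" "\<rho> \<le> r" "\<rho> / r \<le> s / M"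
    using \<open>r > 0\<close> \<open>s > 0\<close> M unfolding \<rho>_def by (auto simp: mult_le_cancel_left1)
  have small: "ser_norm F \<rho> \<le> s" if F: "ser_abs_summable F r" "F 0 0 = 0" "ser_norm F r \<le> M" for F
  proof -
    have "ser_norm F \<rho> \<le> (\<rho> / r) * ser_norm F r" by (rule ser_norm_small) (use F \<rho> in auto)
    also have "\<dots> \<le> (s / M) * M"
      using \<rho> F(3) ser_norm_nonneg[of r F] \<open>r > 0\<close> \<open>s > 0\<close> M by (intro mult_mono) auto
    finally show ?thesis using M by simp
  qed
  show ?thesis using that[OF \<rho>(1,2) small[OF P] small[OF R]] assms(4,5) M(2,3) by simp
qed

context
  fixes b P R :: "nat \<Rightarrow> nat \<Rightarrow> complex" and s \<rho> :: real
  assumes b: "ser_abs_summable b s" and P: "ser_abs_summable P \<rho>" and R: "ser_abs_summable R \<rho>"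
    and \<rho>: "\<rho> > 0" and P_small: "ser_norm P \<rho> \<le> s" and R_small: "ser_norm R \<rho> \<le> s"
begin

private abbreviation "C i j \<equiv> ser_mult (ser_pow P i) (ser_pow R j)"

private lemma C_props:
  shows "ser_abs_summable (C i j) \<rho>" and "ser_norm (C i j) \<rho> \<le> s ^ (i + j)"
    and "norm z \<le> \<rho> \<Longrightarrow> norm w \<le> \<rho> \<Longrightarrow> ser_eval (C i j) z w = ser_eval P z w ^ i * ser_eval R z w ^ j"
proof -
  note PP = ser_pow_props[OF P, of i] and RR = ser_pow_props[OF R, of j]
  show "ser_abs_summable (C i j) \<rho>" using ser_abs_summable_mult(1) PP RR \<rho> by auto
  have "ser_norm (C i j) \<rho> \<le> ser_norm (ser_pow P i) \<rho> * ser_norm (ser_pow R j) \<rho>"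
    using ser_abs_summable_mult(2) PP RR \<rho> by auto
  also have "\<dots> \<le> ser_norm P \<rho> ^ i * ser_norm R \<rho> ^ j"
    using PP RR ser_norm_nonneg \<rho> by (intro mult_mono) auto
  also have "\<dots> \<le> s ^ i * s ^ j"
    using P_small R_small ser_norm_nonneg[of \<rho> P] ser_norm_nonneg[of \<rho> R] \<rho>
    by (intro mult_mono power_mono) auto
  finally show "ser_norm (C i j) \<rho> \<le> s ^ (i + j)" by (simp add: power_add)
  show "ser_eval (C i j) z w = ser_eval P z w ^ i * ser_eval R z w ^ j" if "norm z \<le> \<rho>" "norm w \<le> \<rho>"
    using ser_eval_mult[of "ser_pow P i" \<rho> "ser_pow R j"] PP RR that \<rho> by auto
qed

lemma ser_comp_majorant_summable:
  "(\<lambda>((i,j),(k,l)). norm (b i j * C i j k l) * \<rho> ^ (k + l)) summable_on UNIV"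
proof -
  have "(\<lambda>((i,j),(k,l)). norm (b i j * C i j k l) * \<rho> ^ (k + l)) summable_on Sigma UNIV (\<lambda>_. UNIV)"
  proof (rule summable_on_SigmaI[where g="\<lambda>(i,j). norm (b i j) * ser_norm (C i j) \<rho>"])
    fix x :: "nat \<times> nat"
    obtain i j where x: "x = (i,j)" by (cases x)
    show "((\<lambda>y. (\<lambda>((i,j),(k,l)). norm (b i j * C i j k l) * \<rho> ^ (k + l)) (x, y))
        has_sum (\<lambda>(i,j). norm (b i j) * ser_norm (C i j) \<rho>) x) UNIV"
      using has_sum_cmult_right[OF has_sum_ser_norm[OF C_props(1)], of "norm (b i j)" i j]
      unfolding x by (simp add: case_prod_unfold norm_mult mult.assoc)
  next
    have "norm ((\<lambda>(i,j). norm (b i j) * ser_norm (C i j) \<rho>) x) \<le> (\<lambda>(i,j). norm (b i j) * s ^ (i + j)) x" for x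
      using C_props(2) ser_norm_nonneg \<rho> by (cases x) (auto intro!: mult_left_mono)
    then have "(\<lambda>x. norm ((\<lambda>(i,j). norm (b i j) * ser_norm (C i j) \<rho>) x)) summable_on UNIV"
      by (intro Infinite_Sum.abs_summable_on_comparison_test'[OF b[unfolded ser_abs_summable_def]])
    then show "(\<lambda>(i,j). norm (b i j) * ser_norm (C i j) \<rho>) summable_on UNIV"
      using ser_norm_nonneg \<rho> by (simp add: case_prod_unfold)
  qed (use \<rho> in auto)
  then show ?thesis by simp
qed

lemma ser_comp_abs_summable: "ser_abs_summable (ser_comp b P R) \<rho>"
proof -
  let ?F = "\<lambda>((i,j),(k,l)). norm (b i j * C i j k l) * \<rho> ^ (k + l)"
  have sw: "(\<lambda>(y,x). ?F (x,y)) summable_on UNIV \<times> UNIV"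
    using ser_comp_majorant_summable summable_on_swap[of ?F UNIV UNIV] by simp
  have fibre: "(\<lambda>x. ?F (x,y)) summable_on UNIV" for y
    using summable_on_SigmaD1[OF sw[unfolded UNIV_Times_UNIV[symmetric]], of y] by simp
  have outer: "(\<lambda>y. infsum (\<lambda>x. ?F (x,y)) UNIV) summable_on UNIV"
    using summable_on_SigmaD[OF sw] fibre by simp
  have "norm (ser_comp b P R k l) * \<rho> ^ (k + l) \<le> infsum (\<lambda>x. ?F (x,(k,l))) UNIV" for k l
  proof -
    have "(\<lambda>x. ?F (x,(k,l)) * inverse (\<rho> ^ (k + l))) summable_on UNIV"
      using summable_on_cmult_left[OF fibre] by blast
    then have "(\<lambda>(i,j). norm (b i j * C i j k l)) summable_on UNIV"
      using \<rho> by (simp add: case_prod_unfold mult.assoc)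
    then have "norm (ser_comp b P R k l) \<le> infsum (\<lambda>(i,j). norm (b i j * C i j k l)) UNIV"
      unfolding ser_comp_def by (simp add: case_prod_unfold norm_infsum_bound)
    then have "norm (ser_comp b P R k l) * \<rho> ^ (k + l)
        \<le> infsum (\<lambda>(i,j). norm (b i j * C i j k l)) UNIV * \<rho> ^ (k + l)"
      using \<rho> by (simp add: mult_right_mono)
    also have "\<dots> = infsum (\<lambda>x. ?F (x,(k,l))) UNIV"
      by (simp add: case_prod_unfold infsum_cmult_left')
    finally show ?thesis .
  qed
  then have "(\<lambda>y. norm ((\<lambda>(k,l). norm (ser_comp b P R k l) * \<rho> ^ (k + l)) y)) summable_on UNIV"
    using \<rho> by (intro Infinite_Sum.abs_summable_on_comparison_test'[OF outer]) auto
  then show ?thesis unfolding ser_abs_summable_def using \<rho> by (simp add: case_prod_unfold)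
qed

lemma ser_eval_comp:
  assumes z: "norm z \<le> \<rho>" and w: "norm w \<le> \<rho>"
  shows "ser_eval (ser_comp b P R) z w = ser_eval b (ser_eval P z w) (ser_eval R z w)"
proof -
  define G where "G p = b (fst (fst p)) (snd (fst p))
    * (C (fst (fst p)) (snd (fst p)) (fst (snd p)) (snd (snd p)) * z ^ fst (snd p) * w ^ snd (snd p))"
    for p :: "(nat \<times> nat) \<times> (nat \<times> nat)"
  have "norm (G p) \<le> (\<lambda>((i,j),(k,l)). norm (b i j * C i j k l) * \<rho> ^ (k + l)) p" for p
  proof -
    obtain i j k l where p: "p = ((i,j),(k,l))" by (metis prod.collapse)
    have "norm (C i j k l * z ^ k * w ^ l) \<le> norm (C i j k l) * \<rho> ^ (k + l)"
      by (rule norm_ser_term_le[OF z w])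
    then show ?thesis unfolding G_def p by (simp add: norm_mult mult.assoc mult_left_mono)
  qed
  then have "(\<lambda>p. norm (G p)) summable_on UNIV"
    by (rule Infinite_Sum.abs_summable_on_comparison_test'[OF ser_comp_majorant_summable])
  then have HS: "(G has_sum infsum G UNIV) (Sigma UNIV (\<lambda>_. UNIV))"
    using abs_summable_summable by fastforce
  define X Y where "X = ser_eval P z w" and "Y = ser_eval R z w"
  have "((\<lambda>x. b (fst x) (snd x) * (X ^ fst x * Y ^ snd x)) has_sum infsum G UNIV) UNIV"
  proof (rule has_sum_SigmaD[OF HS])
    fix x :: "nat \<times> nat"
    have "((\<lambda>y. b (fst x) (snd x) * (\<lambda>(k,l). C (fst x) (snd x) k l * z ^ k * w ^ l) y)
        has_sum b (fst x) (snd x) * ser_eval (C (fst x) (snd x)) z w) UNIV"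
      by (rule has_sum_cmult_right[OF has_sum_ser_eval[OF C_props(1) z w]])
    then show "((\<lambda>y. G (x, y)) has_sum b (fst x) (snd x) * (X ^ fst x * Y ^ snd x)) UNIV"
      unfolding G_def X_def Y_def C_props(3)[OF z w] by (simp add: case_prod_unfold)
  qed
  then have "ser_eval b X Y = infsum G UNIV"
    unfolding ser_eval_def by (intro infsumI) (simp add: case_prod_unfold mult.assoc)
  moreover have "ser_eval (ser_comp b P R) z w = infsum G UNIV"
  proof -
    have HS2: "((\<lambda>(y,x). G (x,y)) has_sum infsum G UNIV) (Sigma UNIV (\<lambda>_. UNIV))"
      using HS has_sum_swap[where f=G and A=UNIV and B=UNIV and S="infsum G UNIV"] by simp
    have "((\<lambda>y. ser_comp b P R (fst y) (snd y) * z ^ fst y * w ^ snd y) has_sum infsum G UNIV) UNIV"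
    proof (rule has_sum_SigmaD[OF HS2])
      fix y :: "nat \<times> nat"
      have "(\<lambda>x. G (x,y)) summable_on UNIV"
        using summable_on_SigmaD1[OF HS2[THEN has_sum_imp_summable], of y] by simp
      moreover have "infsum (\<lambda>x. G (x,y)) UNIV = ser_comp b P R (fst y) (snd y) * z ^ fst y * w ^ snd y"
      proof -
        have "infsum (\<lambda>x. G (x,y)) UNIV
            = infsum (\<lambda>x. b (fst x) (snd x) * C (fst x) (snd x) (fst y) (snd y)) UNIV * (z ^ fst y * w ^ snd y)"
          unfolding G_def by (simp add: mult.assoc infsum_cmult_left' flip: infsum_cmult_left')
        also have "infsum (\<lambda>x. b (fst x) (snd x) * C (fst x) (snd x) (fst y) (snd y)) UNIV = ser_comp b P R (fst y) (snd y)"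
          unfolding ser_comp_def by (simp add: case_prod_unfold)
        finally show ?thesis by (simp add: mult.assoc)
      qed
      ultimately show "((\<lambda>x. (\<lambda>(y,x). G (x,y)) (y, x)) has_sum ser_comp b P R (fst y) (snd y) * z ^ fst y * w ^ snd y) UNIV"
        using has_sum_infsum by fastforce
    qed
    then show ?thesis unfolding ser_eval_def by (intro infsumI) (simp add: case_prod_unfold)
  qed
  ultimately show ?thesis unfolding X_def Y_def by simp
qed

end

lemma has_expansion2_comp:
  assumes b: "has_expansion2 b q" and P: "has_expansion2 P f" and R: "has_expansion2 R g"
    and "P 0 0 = 0" "R 0 0 = 0"
  shows "has_expansion2 (ser_comp b P R) (\<lambda>z w. q (f z w) (g z w))"
proof -
  obtain rb where rb: "rb > 0" "ser_abs_summable b rb"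
    and qb: "\<And>X Y. norm X < rb \<Longrightarrow> norm Y < rb \<Longrightarrow> q X Y = ser_eval b X Y"
    using has_expansion2_ser_eval[OF b] by blast
  obtain rP where rP: "rP > 0" "ser_abs_summable P rP"
    and fP: "\<And>z w. norm z < rP \<Longrightarrow> norm w < rP \<Longrightarrow> f z w = ser_eval P z w"
    using has_expansion2_ser_eval[OF P] by blast
  obtain rR where rR: "rR > 0" "ser_abs_summable R rR"
    and gR: "\<And>z w. norm z < rR \<Longrightarrow> norm w < rR \<Longrightarrow> g z w = ser_eval R z w"
    using has_expansion2_ser_eval[OF R] by blast
  define r s where "r = min rP rR" and "s = rb / 2"
  have r: "0 < r" "r \<le> rP" "r \<le> rR" and s: "0 < s" "s < rb"
    using rP rR rb unfolding r_def s_def by auto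
  have "ser_abs_summable P r" "ser_abs_summable R r"
    using ser_abs_summable_mono(1)[OF rP(2), of r] ser_abs_summable_mono(1)[OF rR(2), of r] r by simp_all
  then obtain \<rho> where \<rho>: "0 < \<rho>" "\<rho> \<le> r" "ser_norm P \<rho> \<le> s" "ser_norm R \<rho> \<le> s"
    by (rule ser_comp_radius[where P=P and R=R, OF _ _ r(1) assms(4,5) s(1)])
  have bs: "ser_abs_summable b s" using ser_abs_summable_mono(1)[OF rb(2), of s] s by simp
  have Pr: "ser_abs_summable P \<rho>" and Rr: "ser_abs_summable R \<rho>"
    using ser_abs_summable_mono(1)[OF rP(2), of \<rho>] ser_abs_summable_mono(1)[OF rR(2), of \<rho>] \<rho> r
    by simp_all
  show ?thesis
  proof (rule has_expansion2I[OF \<rho>(1) ser_comp_abs_summable[OF bs Pr Rr \<rho>(1,3,4)]])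
    fix z w :: complex assume zw: "norm z < \<rho>" "norm w < \<rho>"
    have zw': "norm z \<le> \<rho>" "norm w \<le> \<rho>" using zw by simp_all
    have "norm (ser_eval P z w) < rb" "norm (ser_eval R z w) < rb"
      using ser_abs_summable_eval(3)[OF Pr zw'] ser_abs_summable_eval(3)[OF Rr zw'] \<rho>(3,4) s(2) by simp_all
    moreover have "f z w = ser_eval P z w" "g z w = ser_eval R z w"
      using fP[of z w] gR[of z w] zw \<rho>(2) r(2,3) by simp_all
    ultimately show "q (f z w) (g z w) = ser_eval (ser_comp b P R) z w"
      using qb ser_eval_comp[OF bs Pr Rr \<rho>(1,3,4) zw'] by simp
  qed
qed

lemma powser_zero_coeffs:
  fixes a :: "nat \<Rightarrow> complex"
  assumes r: "r > 0" and h: "\<And>z. norm z < r \<Longrightarrow> (\<lambda>n. a n * z ^ n) sums 0"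
  shows "a n = 0"
proof (rule ccontr)
  assume an: "a n \<noteq> 0"
  have a0: "a 0 = 0" using h[of 0] r by simp
  then have n0: "n > 0" using an by (cases n) auto
  have sm: "\<And>x. norm (x - 0) < r \<Longrightarrow> (\<lambda>n. a n * (x - 0) ^ n) sums ((\<lambda>_. 0::complex) x)"
    using h by simp
  show False
  proof (rule powser_0_nonzero[OF r sm _ an n0])
    show "(\<lambda>_. 0::complex) 0 = 0" by simp
  next
    fix s :: real assume s: "0 < s" and nz: "\<And>z::complex. z \<in> cball 0 s - {0} \<Longrightarrow> (\<lambda>_. 0::complex) z \<noteq> 0"
    have "complex_of_real s \<in> cball 0 s - {0}" using s by auto
    from nz[OF this] show False by simp
  qed
qed

lemma ser_abs_summable_diff:
  assumes a1: "ser_abs_summable c r" and a2: "ser_abs_summable c' r" and r: "r \<ge> 0"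
  shows "ser_abs_summable (\<lambda>i j. c i j - c' i j) r"
proof -
  have S: "(\<lambda>x. (\<lambda>(i,j). norm (c i j) * r ^ (i + j)) x + (\<lambda>(i,j). norm (c' i j) * r ^ (i + j)) x) summable_on UNIV"
    by (rule summable_on_add) (use a1 a2 in \<open>auto simp: ser_abs_summable_def\<close>)
  have "(\<lambda>x. norm ((\<lambda>(i,j). norm (c i j - c' i j) * r ^ (i + j)) x)) summable_on UNIV"
  proof (rule Infinite_Sum.abs_summable_on_comparison_test'[OF S])
    fix x :: "nat \<times> nat"
    obtain i j where x: "x = (i,j)" by (cases x)
    have "norm (c i j - c' i j) \<le> norm (c i j) + norm (c' i j)" by (rule norm_triangle_ineq4)
    then have "norm (c i j - c' i j) * r ^ (i + j) \<le> (norm (c i j) + norm (c' i j)) * r ^ (i + j)"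
      using r by (intro mult_right_mono) auto
    then show "norm ((\<lambda>(i,j). norm (c i j - c' i j) * r ^ (i + j)) x)
        \<le> (\<lambda>(i,j). norm (c i j) * r ^ (i + j)) x + (\<lambda>(i,j). norm (c' i j) * r ^ (i + j)) x"
      using r x by (simp add: algebra_simps)
  qed
  moreover have "(\<lambda>x. norm ((\<lambda>(i,j). norm (c i j - c' i j) * r ^ (i + j)) x)) = (\<lambda>(i,j). norm (c i j - c' i j) * r ^ (i + j))"
    using r by (auto simp: fun_eq_iff)
  ultimately show ?thesis unfolding ser_abs_summable_def by simp
qed

lemma ser_coeffs_zero:
  assumes r: "r > 0" and ae: "ser_abs_summable e r"
    and ev0: "\<And>z w. norm z < r \<Longrightarrow> norm w < r \<Longrightarrow> ((\<lambda>(i,j). e i j * z ^ i * w ^ j) has_sum 0) UNIV"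
  shows "e i j = 0"
proof -
  have row_norm: "(\<lambda>j. norm (e i j) * r ^ j) summable_on UNIV" for i
  proof -
    have "(\<lambda>j. norm (e i j) * r ^ (i + j)) summable_on UNIV"
      using summable_on_SigmaD1[of "\<lambda>i j. norm (e i j) * r ^ (i + j)" UNIV "\<lambda>_. UNIV" i] ae
      unfolding ser_abs_summable_def by simp
    then have "(\<lambda>j. norm (e i j) * r ^ (i + j) * inverse (r ^ i)) summable_on UNIV"
      by (rule summable_on_cmult_left)
    moreover have "(\<lambda>j. norm (e i j) * r ^ (i + j) * inverse (r ^ i)) = (\<lambda>j. norm (e i j) * r ^ j)"
      using r(1) by (auto simp: fun_eq_iff power_add field_simps)
    ultimately show ?thesis by simp
  qed
  have row: "(\<lambda>j. e i j * w ^ j) summable_on UNIV" if "norm w < r" for i w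
  proof (rule abs_summable_summable)
    show "(\<lambda>j. norm (e i j * w ^ j)) summable_on UNIV"
    proof (rule Infinite_Sum.abs_summable_on_comparison_test'[OF row_norm[of i]])
      fix j
      have "norm (e i j * w ^ j) = norm (e i j) * norm w ^ j" by (simp add: norm_mult norm_power)
      also have "\<dots> \<le> norm (e i j) * r ^ j" using that by (intro mult_left_mono power_mono) auto
      finally show "norm (e i j * w ^ j) \<le> norm (e i j) * r ^ j" .
    qed
  qed
  \<comment> \<open>Summing first over \<open>j\<close> reduces to the one-variable identity theorem, twice.\<close>
  have rows_zero: "infsum (\<lambda>j. e i j * w ^ j) UNIV = 0" if w: "norm w < r" for i w
  proof (rule powser_zero_coeffs[OF r(1), of "\<lambda>i. infsum (\<lambda>j. e i j * w ^ j) UNIV"])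
    fix z :: complex assume z: "norm z < r"
    have "((\<lambda>i. infsum (\<lambda>j. e i j * w ^ j) UNIV * z ^ i) has_sum 0) UNIV"
    proof (rule has_sum_SigmaD[where B="\<lambda>_. UNIV"])
      show "((\<lambda>(i,j). e i j * z ^ i * w ^ j) has_sum 0) (Sigma UNIV (\<lambda>_. UNIV))" using ev0[OF z w] by simp
    next
      fix i :: nat
      show "((\<lambda>j. (\<lambda>(i,j). e i j * z ^ i * w ^ j) (i, j)) has_sum infsum (\<lambda>j. e i j * w ^ j) UNIV * z ^ i) UNIV"
        using has_sum_cmult_left[OF has_sum_infsum[OF row[OF w, of i]], of "z ^ i"] by (simp add: algebra_simps)
    qed
    then show "(\<lambda>i. infsum (\<lambda>j. e i j * w ^ j) UNIV * z ^ i) sums 0" by (rule has_sum_imp_sums)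
  qed
  show ?thesis
  proof (rule powser_zero_coeffs[OF r(1), of "e i"])
    fix w :: complex assume w: "norm w < r"
    show "(\<lambda>j. e i j * w ^ j) sums 0"
      using has_sum_infsum[OF row[OF w, of i]] rows_zero[OF w, of i] by (simp add: has_sum_imp_sums)
  qed
qed

lemma has_expansion2_unique:
  assumes "has_expansion2 c g" "has_expansion2 c' g"
  shows "c = c'"
proof -
  obtain r1 where r1: "r1 > 0" "ser_abs_summable c r1"
    and e1: "\<And>z w. norm z < r1 \<Longrightarrow> norm w < r1 \<Longrightarrow> g z w = ser_eval c z w"
    using has_expansion2_ser_eval[OF assms(1)] by blast
  obtain r2 where r2: "r2 > 0" "ser_abs_summable c' r2"
    and e2: "\<And>z w. norm z < r2 \<Longrightarrow> norm w < r2 \<Longrightarrow> g z w = ser_eval c' z w"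
    using has_expansion2_ser_eval[OF assms(2)] by blast
  define r where "r = min r1 r2"
  have r: "r > 0" "r \<le> r1" "r \<le> r2" using r1 r2 unfolding r_def by auto
  have a1: "ser_abs_summable c r" and a2: "ser_abs_summable c' r"
    using ser_abs_summable_mono(1)[OF r1(2)] ser_abs_summable_mono(1)[OF r2(2)] r by auto
  define e where "e i j = c i j - c' i j" for i j
  have ev0: "((\<lambda>(i,j). e i j * z ^ i * w ^ j) has_sum 0) UNIV" if "norm z < r" "norm w < r" for z w
  proof -
    have "((\<lambda>x. (\<lambda>(i,j). c i j * z ^ i * w ^ j) x + - (\<lambda>(i,j). c' i j * z ^ i * w ^ j) x)
        has_sum (ser_eval c z w + - ser_eval c' z w)) UNIV"
      by (rule has_sum_add[OF has_sum_ser_eval[OF a1] has_sum_uminusI[OF has_sum_ser_eval[OF a2]]])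
         (use that in auto)
    moreover have "ser_eval c z w = ser_eval c' z w" using e1[of z w] e2[of z w] that r by simp
    ultimately show ?thesis unfolding e_def by (simp add: case_prod_unfold algebra_simps)
  qed
  have "ser_abs_summable e r" unfolding e_def using ser_abs_summable_diff[OF a1 a2] r by simp
  then have "e i j = 0" for i j by (rule ser_coeffs_zero[OF r(1) _ ev0])
  then show ?thesis unfolding e_def by (auto simp: fun_eq_iff)
qed

lemma germ_coeffs_eq:
  assumes "has_expansion2 c g"
  shows "germ_coeffs g = c"
  using someI[of "\<lambda>c. has_expansion2 c g", OF assms] has_expansion2_unique[OF _ assms]
  unfolding germ_coeffs_def by blast

section \<open>Coefficients of the iterates\<close>

primrec base_coeffs :: "(nat \<Rightarrow> complex) \<Rightarrow> nat \<Rightarrow> nat \<Rightarrow> nat \<Rightarrow> complex" where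
  "base_coeffs a 0 = ser_monom 1 0"
| "base_coeffs a (Suc n) = ser_comp (\<lambda>i j. if j = 0 then a i else 0) (base_coeffs a n) (base_coeffs a n)"

primrec fibre_coeffs ::
    "(nat \<Rightarrow> complex) \<Rightarrow> (nat \<Rightarrow> nat \<Rightarrow> complex) \<Rightarrow> nat \<Rightarrow> nat \<Rightarrow> nat \<Rightarrow> complex" where
  "fibre_coeffs a b 0 = ser_monom 0 1"
| "fibre_coeffs a b (Suc n) = ser_comp b (base_coeffs a n) (fibre_coeffs a b n)"

lemma has_expansion2_base_coeffs:
  assumes "has_expansion1 a p" "a 0 = 0"
  shows "has_expansion2 (base_coeffs a n) (\<lambda>z w. (p ^^ n) z) \<and> base_coeffs a n 0 0 = 0"
proof (induction n)
  case 0
  have "base_coeffs a 0 0 0 = 0" by (simp add: ser_monom_def)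
  then show ?case using has_expansion2_monom[of 1 0] by simp
next
  case (Suc n)
  then have IH: "has_expansion2 (base_coeffs a n) (\<lambda>z w. (p ^^ n) z)" "base_coeffs a n 0 0 = 0" by auto
  have "has_expansion2 (base_coeffs a (Suc n)) (\<lambda>z w. (\<lambda>z w. p z) ((p ^^ n) z) ((p ^^ n) z))"
    unfolding base_coeffs.simps by (rule has_expansion2_comp[OF has_expansion2_in_z[OF assms(1)] IH(1) IH(1) IH(2) IH(2)])
  moreover have "base_coeffs a (Suc n) 0 0 = 0"
    using ser_comp_00[of "base_coeffs a n" "base_coeffs a n"] IH(2) assms(2) by simp
  ultimately show ?case by simp
qed

lemma has_expansion2_fibre_coeffs:
  assumes "has_expansion1 a p" "a 0 = 0" "has_expansion2 b q" "b 0 0 = 0"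
  shows "has_expansion2 (fibre_coeffs a b n) (skewQ p q n) \<and> fibre_coeffs a b n 0 0 = 0"
proof (induction n)
  case 0
  have "skewQ p q 0 = (\<lambda>z w. z ^ 0 * w ^ 1)" and "fibre_coeffs a b 0 0 0 = 0"
    by (simp_all add: fun_eq_iff ser_monom_def)
  then show ?case using has_expansion2_monom[of 0 1] by simp
next
  case (Suc n)
  then have IH: "has_expansion2 (fibre_coeffs a b n) (skewQ p q n)" "fibre_coeffs a b n 0 0 = 0" by auto
  note base = has_expansion2_base_coeffs[OF assms(1,2), of n]
  have "has_expansion2 (fibre_coeffs a b (Suc n)) (\<lambda>z w. q ((p ^^ n) z) (skewQ p q n z w))"
    unfolding fibre_coeffs.simps by (rule has_expansion2_comp[OF assms(3) base[THEN conjunct1] IH(1) base[THEN conjunct2] IH(2)])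
  moreover have "fibre_coeffs a b (Suc n) 0 0 = 0"
    using ser_comp_00[of "base_coeffs a n" "fibre_coeffs a b n" b] base IH(2) assms(4) by simp
  moreover have "(\<lambda>z w. q ((p ^^ n) z) (skewQ p q n z w)) = skewQ p q (Suc n)" by (simp add: fun_eq_iff)
  ultimately show ?case by simp
qed

lemma ser_mult_monom: "ser_mult (ser_monom i1 j1) (ser_monom i2 j2) = ser_monom (i1 + i2) (j1 + j2)"
proof (intro ext)
  fix k l
  show "ser_mult (ser_monom i1 j1) (ser_monom i2 j2) k l = ser_monom (i1 + i2) (j1 + j2) k l"
  proof (cases "i1 \<le> k \<and> j1 \<le> l")
    case True
    let ?f = "\<lambda>i j. ser_monom i1 j1 i j * ser_monom i2 j2 (k - i) (l - j)"
    have "ser_mult (ser_monom i1 j1) (ser_monom i2 j2) k l = (\<Sum>j\<le>l. ?f i1 j)"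
      unfolding ser_mult_def using True
      by (intro sum_single_support) (auto simp: ser_monom_def intro!: sum.neutral)
    also have "\<dots> = ?f i1 j1"
      using True by (intro sum_single_support) (auto simp: ser_monom_def)
    finally have "ser_mult (ser_monom i1 j1) (ser_monom i2 j2) k l = ser_monom i2 j2 (k - i1) (l - j1)"
      by (simp add: ser_monom_def)
    then show ?thesis using True by (auto simp: ser_monom_def)
  next
    case False
    then show ?thesis unfolding ser_mult_def by (auto simp: ser_monom_def intro!: sum.neutral)
  qed
qed

lemma ser_pow_monom: "ser_pow (ser_monom i0 j0) n = ser_monom (n * i0) (n * j0)"
  by (induction n) (simp_all add: ser_mult_monom)

lemma fibre_coeffs_1: "fibre_coeffs a b 1 = b"
proof (intro ext)
  fix k l
  have "fibre_coeffs a b 1 k l = infsum (\<lambda>(i,j). b i j * ser_monom i j k l) UNIV"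
    by (simp add: ser_comp_def ser_pow_monom ser_mult_monom)
  also have "\<dots> = infsum (\<lambda>(i,j). b i j * ser_monom i j k l) {(k,l)}"
    by (rule infsum_cong_neutral) (auto simp: ser_monom_def split: if_splits)
  finally show "fibre_coeffs a b 1 k l = b k l" by (simp add: ser_monom_def)
qed

section \<open>Edges of the iterates\<close>

primrec hom_sum :: "nat \<Rightarrow> nat \<Rightarrow> nat \<Rightarrow> nat" where
  "hom_sum e d 0 = 1"
| "hom_sum e d (Suc m) = e ^ Suc m + d * hom_sum e d m"

lemma real_hom_sum: "real (hom_sum e d m) = (\<Sum>k<Suc m. real e ^ (m - k) * real d ^ k)"
proof (induction m)
  case 0
  then show ?case by simp
next
  case (Suc m)
  have "(\<Sum>k<Suc (Suc m). real e ^ (Suc m - k) * real d ^ k)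
      = real e ^ Suc m + (\<Sum>k<Suc m. real e ^ (Suc m - Suc k) * real d ^ Suc k)"
    by (subst sum.lessThan_Suc_shift) simp
  also have "(\<Sum>k<Suc m. real e ^ (Suc m - Suc k) * real d ^ Suc k) = real d * (\<Sum>k<Suc m. real e ^ (m - k) * real d ^ k)"
    by (simp add: sum_distrib_left algebra_simps)
  finally show ?case using Suc by (simp add: algebra_simps)
qed

lemma slope_y_intercept_of_line:
  fixes x1 y1 x2 y2 u v L :: real
  assumes u: "u > 0" and x: "x1 < x2" and l1: "v * x1 + u * y1 = L" and l2: "v * x2 + u * y2 = L"
  shows "slope (x1,y1) (x2,y2) = - v / u" "y_intercept (x1,y1) (x2,y2) = L / u"
proof -
  have "u * (y2 - y1) = - v * (x2 - x1)" using l1 l2 by (simp add: algebra_simps)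
  then have s: "(y2 - y1) / (x2 - x1) = - v / u" using u x by (simp add: field_simps)
  then show "slope (x1,y1) (x2,y2) = - v / u" unfolding slope_def by simp
  have "y_intercept (x1,y1) (x2,y2) = y1 + v / u * x1" unfolding y_intercept_def using s by simp
  also have "\<dots> = (v * x1 + u * y1) / u" using u by (simp add: field_simps)
  finally show "y_intercept (x1,y1) (x2,y2) = L / u" using l1 by simp
qed

lemma ser_comp_edge_step:
  fixes \<alpha> \<beta> D K M :: nat
  assumes "\<beta> > 0"
    and P: "edge_supported \<alpha> \<beta> P (\<alpha> * D) D D" "P D 0 \<noteq> 0"
    and R: "edge_supported \<alpha> \<beta> R K lo hi" "\<alpha> * lo + \<beta> * ylo = K" "\<alpha> * hi + \<beta> * yhi = K"
      "R lo ylo \<noteq> 0" "R hi yhi \<noteq> 0"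
    and b_ends: "b ia ja \<noteq> 0" "b ib jb \<noteq> 0" "ia * (\<alpha> * D) + ja * K = M" "ib * (\<alpha> * D) + jb * K = M"
    and b_above: "\<forall>i j. b i j \<noteq> 0 \<longrightarrow> M \<le> i * (\<alpha> * D) + j * K"
    and b_first: "\<forall>i j. b i j \<noteq> 0 \<longrightarrow> i * (\<alpha> * D) + j * K = M \<longrightarrow> (i,j) \<noteq> (ia,ja) \<longrightarrow>
      ia * D + ja * lo < i * D + j * lo"
    and b_last: "\<forall>i j. b i j \<noteq> 0 \<longrightarrow> i * (\<alpha> * D) + j * K = M \<longrightarrow> (i,j) \<noteq> (ib,jb) \<longrightarrow>
      i * D + j * hi < ib * D + jb * hi"
  shows "edge_supported \<alpha> \<beta> (ser_comp b P R) M (ia * D + ja * lo) (ib * D + jb * hi)"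
    and "ser_comp b P R (ia * D + ja * lo) (ja * ylo) \<noteq> 0"
    and "ser_comp b P R (ib * D + jb * hi) (jb * yhi) \<noteq> 0"
proof -
  have lo_min: "ia * D + ja * lo \<le> i * D + j * lo" if "b i j \<noteq> 0" "i * (\<alpha> * D) + j * K = M" for i j
    using b_first[rule_format, OF that] by (cases "(i,j) = (ia,ja)") auto
  have hi_max: "i * D + j * hi \<le> ib * D + jb * hi" if "b i j \<noteq> 0" "i * (\<alpha> * D) + j * K = M" for i j
    using b_last[rule_format, OF that] by (cases "(i,j) = (ib,jb)") auto
  show "edge_supported \<alpha> \<beta> (ser_comp b P R) M (ia * D + ja * lo) (ib * D + jb * hi)"
    using b_above lo_min hi_max by (intro edge_supported_comp[OF P(1) R(1)]) blast
  have "\<alpha> * D + \<beta> * 0 = \<alpha> * D" by simp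
  note edge_end = ser_comp_edge_end[OF P(1) R(1) \<open>\<beta> > 0\<close> this]
  have iso_lo: "\<not> (i * D + j * lo \<le> ia * D + ja * lo \<and> ia * D + ja * lo \<le> i * D + j * hi)"
    if "b i j \<noteq> 0" "i * (\<alpha> * D) + j * K = M" "(i,j) \<noteq> (ia,ja)" for i j
    using b_first[rule_format, OF that] by simp
  have iso_hi: "\<not> (i * D + j * lo \<le> ib * D + jb * hi \<and> ib * D + jb * hi \<le> i * D + j * hi)"
    if "b i j \<noteq> 0" "i * (\<alpha> * D) + j * K = M" "(i,j) \<noteq> (ib,jb)" for i j
    using b_last[rule_format, OF that] by simp
  have "ser_comp b P R (ia * D + ja * lo) (ia * 0 + ja * ylo) = b ia ja * P D 0 ^ ia * R lo ylo ^ ja"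
    by (rule edge_end[OF R(2) b_above[rule_format] b_ends(3) _ iso_lo]) simp_all
  then show "ser_comp b P R (ia * D + ja * lo) (ja * ylo) \<noteq> 0" using P(2) R(4) b_ends(1) by simp
  have "ser_comp b P R (ib * D + jb * hi) (ib * 0 + jb * yhi) = b ib jb * P D 0 ^ ib * R hi yhi ^ jb"
    by (rule edge_end[OF R(3) b_above[rule_format] b_ends(4) _ iso_hi]) simp_all
  then show "ser_comp b P R (ib * D + jb * hi) (jb * yhi) \<noteq> 0" using P(2) R(5) b_ends(2) by simp
qed

lemma base_coeffs_edge:
  fixes \<alpha> \<beta> \<delta> :: nat
  assumes "\<delta> \<ge> 1" "a \<delta> \<noteq> 0" "\<forall>k<\<delta>. a k = 0" "\<alpha> > 0" "\<beta> > 0"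
  shows "edge_supported \<alpha> \<beta> (base_coeffs a n) (\<alpha> * \<delta> ^ n) (\<delta> ^ n) (\<delta> ^ n) \<and> base_coeffs a n (\<delta> ^ n) 0 \<noteq> 0"
proof (induction n)
  case 0
  show ?case by (auto simp: edge_supported_def ser_monom_def)
next
  case (Suc n)
  let ?a = "\<lambda>i j. if j = 0 then a i else 0" and ?D = "\<delta> ^ n"
  have S: "edge_supported \<alpha> \<beta> (base_coeffs a n) (\<alpha> * ?D) ?D ?D" and nz: "base_coeffs a n ?D 0 \<noteq> 0"
    using Suc by auto
  have "?D > 0" using assms(1) by simp
  \<comment> \<open>The only term of \<open>p\<close> of minimal level is its leading term \<open>a\<^sub>\<delta> z\<^sup>\<delta>\<close>.\<close>
  have lead: "\<delta> * (\<alpha> * ?D) + 0 * (\<alpha> * ?D) \<le> i * (\<alpha> * ?D) + j * (\<alpha> * ?D) \<and>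
      (i * (\<alpha> * ?D) + j * (\<alpha> * ?D) = \<delta> * (\<alpha> * ?D) + 0 * (\<alpha> * ?D) \<longrightarrow> (i, j) = (\<delta>, 0))"
    if "?a i j \<noteq> 0" for i j
  proof -
    have "j = 0" "a i \<noteq> 0" using that by (auto split: if_splits)
    then have "\<delta> \<le> i" using assms(3) by (metis not_le)
    then show ?thesis using \<open>j = 0\<close> \<open>?D > 0\<close> assms(4) by auto
  qed
  have line: "\<alpha> * ?D + \<beta> * 0 = \<alpha> * ?D" by simp
  have a0: "?a \<delta> 0 \<noteq> 0" using assms(2) by simp
  have above: "\<forall>i j. ?a i j \<noteq> 0 \<longrightarrow> \<delta> * (\<alpha> * ?D) + 0 * (\<alpha> * ?D) \<le> i * (\<alpha> * ?D) + j * (\<alpha> * ?D)"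
    and first: "\<forall>i j. ?a i j \<noteq> 0 \<longrightarrow> i * (\<alpha> * ?D) + j * (\<alpha> * ?D) = \<delta> * (\<alpha> * ?D) + 0 * (\<alpha> * ?D) \<longrightarrow>
      (i, j) \<noteq> (\<delta>, 0) \<longrightarrow> \<delta> * ?D + 0 * ?D < i * ?D + j * ?D"
    and last: "\<forall>i j. ?a i j \<noteq> 0 \<longrightarrow> i * (\<alpha> * ?D) + j * (\<alpha> * ?D) = \<delta> * (\<alpha> * ?D) + 0 * (\<alpha> * ?D) \<longrightarrow>
      (i, j) \<noteq> (\<delta>, 0) \<longrightarrow> i * ?D + j * ?D < \<delta> * ?D + 0 * ?D"
    using lead by blast+
  note step = ser_comp_edge_step[where b="?a" and ia=\<delta> and ja=0 and ib=\<delta> and jb=0,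
      OF assms(5) S nz S line line nz nz a0 a0 refl refl above first last]
  have "edge_supported \<alpha> \<beta> (base_coeffs a (Suc n)) (\<delta> * (\<alpha> * ?D) + 0 * (\<alpha> * ?D)) (\<delta> * ?D + 0 * ?D) (\<delta> * ?D + 0 * ?D)"
    "base_coeffs a (Suc n) (\<delta> * ?D + 0 * ?D) (0 * 0) \<noteq> 0"
    using step(1,2) by simp_all
  then show ?case by (simp add: algebra_simps)
qed

primrec edge_start :: "nat \<Rightarrow> nat \<Rightarrow> nat \<Rightarrow> nat \<Rightarrow> nat \<Rightarrow> nat" where
  "edge_start A g e d 0 = A"
| "edge_start A g e d (Suc m) = g * e ^ Suc m + d * edge_start A g e d m"

lemma weighted_level_strict:
  fixes \<alpha> \<beta> i j g d D K :: nat
  assumes "\<alpha> * g + \<beta> * d \<le> \<alpha> * i + \<beta> * j" and "d \<le> j" and "\<beta> * D < K"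
  shows "g * (\<alpha> * D) + d * K \<le> i * (\<alpha> * D) + j * K"
    and "i * (\<alpha> * D) + j * K = g * (\<alpha> * D) + d * K \<Longrightarrow> \<alpha> * g * D = \<alpha> * i * D \<and> j = d"
proof -
  obtain t where j: "j = d + t" using assms(2) le_Suc_ex by blast
  have "\<alpha> * g \<le> \<alpha> * i + \<beta> * t" using assms(1) unfolding j by (simp add: algebra_simps)
  from mult_right_mono[OF this, of D]
  have h: "\<alpha> * g * D \<le> \<alpha> * i * D + \<beta> * t * D" by (simp add: algebra_simps)
  have le: "\<beta> * t * D \<le> t * K" and less: "t > 0 \<Longrightarrow> \<beta> * t * D < t * K"
    using assms(3) by (simp_all add: mult.commute mult.left_commute)
  have e: "i * (\<alpha> * D) + j * K = \<alpha> * i * D + t * K + d * K" unfolding j by (simp add: algebra_simps)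
  have g: "g * (\<alpha> * D) = \<alpha> * g * D" by simp
  show "g * (\<alpha> * D) + d * K \<le> i * (\<alpha> * D) + j * K" using h le e g by linarith
  assume eq: "i * (\<alpha> * D) + j * K = g * (\<alpha> * D) + d * K"
  have "t = 0"
  proof (rule ccontr)
    assume "t \<noteq> 0"
    then show False using less h e eq g by linarith
  qed
  then have "t * K = 0" by simp
  show "\<alpha> * g * D = \<alpha> * i * D \<and> j = d"
  proof
    show "\<alpha> * g * D = \<alpha> * i * D" using eq e g \<open>t * K = 0\<close> by linarith
    show "j = d" using \<open>t = 0\<close> j by simp
  qed
qed

lemma weighted_level_on_line:
  fixes \<alpha> \<beta> i j x y D u v :: nat
  assumes "\<alpha> * i + \<beta> * j = \<alpha> * x + \<beta> * y" and "\<alpha> * u + \<beta> * v = \<beta> * D" and "x \<le> i"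
  shows "\<beta> * (i * D + j * u) = \<beta> * (x * D + y * u) + (i - x) * (\<beta> * v)"
proof -
  obtain s where i: "i = x + s" using assms(3) le_Suc_ex by blast
  have "\<alpha> * s + \<beta> * j = \<beta> * y" using assms(1) unfolding i by (simp add: algebra_simps)
  then have "\<alpha> * s * u + \<beta> * j * u = \<beta> * y * u" by (metis add_mult_distrib)
  moreover have "s * (\<alpha> * u) + s * (\<beta> * v) = s * (\<beta> * D)" using assms(2) by (metis add_mult_distrib2)
  ultimately show ?thesis unfolding i by (simp add: algebra_simps)
qed

locale skew_edge = last_edge b A B \<gamma> d
  for b :: "nat \<Rightarrow> nat \<Rightarrow> complex" and A B \<gamma> d :: nat +
  fixes a :: "nat \<Rightarrow> complex" and \<delta> :: nat
  assumes \<delta>_pos: "\<delta> \<ge> 1" and a_\<delta>: "a \<delta> \<noteq> 0" and a_low: "\<forall>k<\<delta>. a k = 0" and d_pos: "d > 0"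
begin

abbreviation "\<alpha> \<equiv> B - d"
abbreviation "\<beta> \<equiv> \<gamma> - A"
abbreviation "K \<equiv> \<alpha> * A + \<beta> * B"

lemma \<alpha>_pos: "\<alpha> > 0" and \<beta>_pos: "\<beta> > 0"
  using A_less_\<gamma> d_less_B by auto

lemma B_mult: "B * x = d * x + \<alpha> * x"
  using d_less_B by (simp add: diff_mult_distrib)

lemma b_edge: "edge_supported \<alpha> \<beta> b K A \<gamma>"
  by (rule last_edge_supported)

lemma base_edge:
  "edge_supported \<alpha> \<beta> (base_coeffs a n) (\<alpha> * \<delta> ^ n) (\<delta> ^ n) (\<delta> ^ n) \<and> base_coeffs a n (\<delta> ^ n) 0 \<noteq> 0"
  by (rule base_coeffs_edge[OF \<delta>_pos a_\<delta> a_low \<alpha>_pos \<beta>_pos])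

lemma real_edge_line:
  "slope (real A, real B) (real \<gamma>, real d) = - real \<alpha> / real \<beta>"
  "y_intercept (real A, real B) (real \<gamma>, real d) = real K / real \<beta>"
proof -
  have "real \<alpha> * real \<gamma> + real \<beta> * real d = real K"
    using edge_level by (metis of_nat_add of_nat_mult)
  then show "slope (real A, real B) (real \<gamma>, real d) = - real \<alpha> / real \<beta>"
    "y_intercept (real A, real B) (real \<gamma>, real d) = real K / real \<beta>"
    using slope_y_intercept_of_line[of "real \<beta>" "real A" "real \<gamma>" "real \<alpha>" "real B" "real K" "real d"]
      \<beta>_pos A_less_\<gamma> by simp_all
qed

text \<open>If the weight of \<open>w\<close> exceeds its weight along the last edge, the lowest term
  \<open>(\<gamma>, d)\<close> of that edge is the only term of \<open>b\<close> of minimal weight.\<close>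
lemma last_term_unique_minimum:
  fixes D L :: nat
  assumes "\<beta> * D < L" "D > 0" "b i j \<noteq> 0"
  shows "\<gamma> * (\<alpha> * D) + d * L \<le> i * (\<alpha> * D) + j * L"
    and "i * (\<alpha> * D) + j * L = \<gamma> * (\<alpha> * D) + d * L \<Longrightarrow> (i, j) = (\<gamma>, d)"
proof -
  have "\<alpha> * \<gamma> + \<beta> * d \<le> \<alpha> * i + \<beta> * j"
    using b_edge assms(3) edge_level unfolding edge_supported_def by auto
  note lev = weighted_level_strict[OF this support_height[OF assms(3)] assms(1)]
  show "\<gamma> * (\<alpha> * D) + d * L \<le> i * (\<alpha> * D) + j * L" by (rule lev(1))
  show "(i, j) = (\<gamma>, d)" if "i * (\<alpha> * D) + j * L = \<gamma> * (\<alpha> * D) + d * L"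
    using lev(2)[OF that] assms(2) \<alpha>_pos by simp
qed

lemma edge_term_after_start:
  fixes D u v :: nat
  assumes "b i j \<noteq> 0" "\<alpha> * i + \<beta> * j = K" "(i, j) \<noteq> (A, B)" "\<alpha> * u + \<beta> * v = \<beta> * D" "v > 0"
  shows "A * D + B * u < i * D + j * u"
proof -
  have "A \<le> i" using b_edge assms(1,2) unfolding edge_supported_def by auto
  have "i \<noteq> A"
  proof
    assume "i = A"
    then have "\<beta> * j = \<beta> * B" using assms(2) by simp
    then show False using \<open>i = A\<close> assms(3) \<beta>_pos by simp
  qed
  then have "0 < (i - A) * (\<beta> * v)" using \<open>A \<le> i\<close> \<beta>_pos assms(5) by simp
  then have "\<beta> * (A * D + B * u) < \<beta> * (i * D + j * u)"
    using weighted_level_on_line[OF assms(2) assms(4) \<open>A \<le> i\<close>] by simp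
  then show ?thesis by simp
qed

lemma edge_term_before_end:
  fixes D u v :: nat
  assumes "b i j \<noteq> 0" "\<alpha> * i + \<beta> * j = K" "(i, j) \<noteq> (\<gamma>, d)" "\<alpha> * u + \<beta> * v = \<beta> * D" "v > 0"
  shows "i * D + j * u < \<gamma> * D + d * u"
proof -
  have "i \<le> \<gamma>" using b_edge assms(1,2) unfolding edge_supported_def by auto
  have line: "\<alpha> * \<gamma> + \<beta> * d = \<alpha> * i + \<beta> * j" using assms(2) edge_level by simp
  have "i \<noteq> \<gamma>"
  proof
    assume "i = \<gamma>"
    then have "\<beta> * d = \<beta> * j" using line by simp
    then show False using \<open>i = \<gamma>\<close> assms(3) \<beta>_pos by simp
  qed
  then have "0 < (\<gamma> - i) * (\<beta> * v)" using \<open>i \<le> \<gamma>\<close> \<beta>_pos assms(5) by simp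
  then have "\<beta> * (i * D + j * u) < \<beta> * (\<gamma> * D + d * u)"
    using weighted_level_on_line[OF line assms(4) \<open>i \<le> \<gamma>\<close>] by linarith
  then show ?thesis by simp
qed

lemma fibre_edge_strict:
  assumes "\<beta> * \<delta> < K"
  defines "G m \<equiv> \<gamma> * hom_sum \<delta> d m" and "L m \<equiv> \<alpha> * (\<gamma> * hom_sum \<delta> d m) + \<beta> * d ^ Suc m"
  shows "edge_supported \<alpha> \<beta> (fibre_coeffs a b (Suc m)) (L m) (edge_start A \<gamma> \<delta> d m) (G m)
    \<and> fibre_coeffs a b (Suc m) (edge_start A \<gamma> \<delta> d m) (B * d ^ m) \<noteq> 0
    \<and> fibre_coeffs a b (Suc m) (G m) (d ^ Suc m) \<noteq> 0
    \<and> \<beta> * \<delta> ^ Suc m < L m \<and> G m = edge_start A \<gamma> \<delta> d m + \<beta> * d ^ m"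
proof (induction m)
  case 0
  have "L 0 = K" unfolding L_def using edge_level by simp
  moreover have "fibre_coeffs a b (Suc 0) = b" using fibre_coeffs_1 by simp
  ultimately show ?case using b_edge edge_coeffs assms(1) A_less_\<gamma> by (simp add: G_def)
next
  case (Suc m)
  define Al D where "Al = edge_start A \<gamma> \<delta> d m" and "D = \<delta> ^ Suc m"
  have R: "edge_supported \<alpha> \<beta> (fibre_coeffs a b (Suc m)) (L m) Al (G m)"
    "fibre_coeffs a b (Suc m) Al (B * d ^ m) \<noteq> 0" "fibre_coeffs a b (Suc m) (G m) (d ^ Suc m) \<noteq> 0"
    and LD: "\<beta> * D < L m" and GA: "G m = Al + \<beta> * d ^ m"
    using Suc unfolding Al_def D_def by auto
  have L_G: "L m = \<alpha> * G m + \<beta> * d ^ Suc m" unfolding L_def G_def ..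
  have lines: "\<alpha> * Al + \<beta> * (B * d ^ m) = L m" "\<alpha> * G m + \<beta> * d ^ Suc m = L m"
    unfolding L_G GA B_mult[of "d ^ m"] by (simp_all only: distrib_left power_Suc mult_ac add_ac)
  have "D > 0" using \<delta>_pos unfolding D_def by simp
  note unique = last_term_unique_minimum[OF LD this]
  have above: "\<forall>i j. b i j \<noteq> 0 \<longrightarrow> \<gamma> * (\<alpha> * D) + d * L m \<le> i * (\<alpha> * D) + j * L m"
    and first: "\<forall>i j. b i j \<noteq> 0 \<longrightarrow> i * (\<alpha> * D) + j * L m = \<gamma> * (\<alpha> * D) + d * L m \<longrightarrow>
      (i, j) \<noteq> (\<gamma>, d) \<longrightarrow> \<gamma> * D + d * Al < i * D + j * Al"
    and last: "\<forall>i j. b i j \<noteq> 0 \<longrightarrow> i * (\<alpha> * D) + j * L m = \<gamma> * (\<alpha> * D) + d * L m \<longrightarrow>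
      (i, j) \<noteq> (\<gamma>, d) \<longrightarrow> i * D + j * G m < \<gamma> * D + d * G m"
    using unique by blast+
  note step = ser_comp_edge_step[OF \<beta>_pos base_edge[of "Suc m", folded D_def, THEN conjunct1]
      base_edge[of "Suc m", folded D_def, THEN conjunct2] R(1) lines R(2,3) edge_coeffs(2) edge_coeffs(2)
      refl refl above first last]
  have Gs: "G (Suc m) = \<gamma> * D + d * G m"
    unfolding G_def D_def by (simp only: hom_sum.simps distrib_left mult_ac)
  have As: "edge_start A \<gamma> \<delta> d (Suc m) = \<gamma> * D + d * Al" unfolding Al_def D_def by simp
  have Ls: "L (Suc m) = \<gamma> * (\<alpha> * D) + d * L m"
    unfolding L_def D_def by (simp only: hom_sum.simps power_Suc distrib_left mult_ac add_ac)
  have below: "\<beta> * \<delta> ^ Suc (Suc m) < \<gamma> * (\<alpha> * D) + d * L m"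
  proof -
    have "D > 0" using \<delta>_pos unfolding D_def by simp
    have "\<beta> * \<delta> ^ Suc (Suc m) = \<beta> * \<delta> * D" unfolding D_def by simp
    also have "\<dots> < K * D" using assms(1) \<open>D > 0\<close> by simp
    also have "K * D = \<gamma> * (\<alpha> * D) + d * (\<beta> * D)"
      unfolding edge_level[symmetric] by (simp only: distrib_left distrib_right mult_ac)
    also have "\<dots> \<le> \<gamma> * (\<alpha> * D) + d * L m" using LD by simp
    finally show ?thesis .
  qed
  have GA': "\<gamma> * D + d * G m = \<gamma> * D + d * Al + \<beta> * d ^ Suc m"
    unfolding GA by (simp only: power_Suc distrib_left mult_ac add_ac)
  have pow: "B * d ^ Suc m = d * (B * d ^ m)" "d ^ Suc (Suc m) = d * d ^ Suc m" by simp_all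
  show ?case unfolding fibre_coeffs.simps(2)[of a b "Suc m"] Gs As Ls pow
    using step below GA' by blast
qed

lemma fibre_edge_critical:
  assumes "\<beta> * \<delta> = K"
  defines "G m \<equiv> \<gamma> * hom_sum \<delta> d m" and "H m \<equiv> A * hom_sum \<delta> B m"
  shows "edge_supported \<alpha> \<beta> (fibre_coeffs a b (Suc m)) (\<beta> * \<delta> ^ Suc m) (H m) (G m)
    \<and> fibre_coeffs a b (Suc m) (H m) (B ^ Suc m) \<noteq> 0 \<and> fibre_coeffs a b (Suc m) (G m) (d ^ Suc m) \<noteq> 0
    \<and> \<alpha> * H m + \<beta> * B ^ Suc m = \<beta> * \<delta> ^ Suc m \<and> \<alpha> * G m + \<beta> * d ^ Suc m = \<beta> * \<delta> ^ Suc m"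
proof (induction m)
  case 0
  have "fibre_coeffs a b (Suc 0) = b" using fibre_coeffs_1 by simp
  then show ?case using b_edge edge_coeffs assms(1) edge_level by (simp add: G_def H_def)
next
  case (Suc m)
  define D where "D = \<delta> ^ Suc m"
  have R: "edge_supported \<alpha> \<beta> (fibre_coeffs a b (Suc m)) (\<beta> * D) (H m) (G m)"
    "\<alpha> * H m + \<beta> * B ^ Suc m = \<beta> * D" "\<alpha> * G m + \<beta> * d ^ Suc m = \<beta> * D"
    "fibre_coeffs a b (Suc m) (H m) (B ^ Suc m) \<noteq> 0" "fibre_coeffs a b (Suc m) (G m) (d ^ Suc m) \<noteq> 0"
    using Suc unfolding D_def by auto
  \<comment> \<open>Here the weights are proportional to those of the last edge, so all of it has minimal level.\<close>
  have level: "i * (\<alpha> * D) + j * (\<beta> * D) = (\<alpha> * i + \<beta> * j) * D" for i j by (simp add: algebra_simps)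
  have above: "\<forall>i j. b i j \<noteq> 0 \<longrightarrow> A * (\<alpha> * D) + B * (\<beta> * D) \<le> i * (\<alpha> * D) + j * (\<beta> * D)"
    using b_edge unfolding level edge_supported_def by auto
  have on_edge: "\<alpha> * i + \<beta> * j = K"
    if "i * (\<alpha> * D) + j * (\<beta> * D) = A * (\<alpha> * D) + B * (\<beta> * D)" for i j
  proof -
    have "D > 0" using \<delta>_pos unfolding D_def by simp
    then show ?thesis using that unfolding level by simp
  qed
  have "B ^ Suc m > 0" "d ^ Suc m > 0" using d_pos d_less_B by simp_all
  then have first: "\<forall>i j. b i j \<noteq> 0 \<longrightarrow> i * (\<alpha> * D) + j * (\<beta> * D) = A * (\<alpha> * D) + B * (\<beta> * D) \<longrightarrow>
      (i,j) \<noteq> (A,B) \<longrightarrow> A * D + B * H m < i * D + j * H m"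
    and last: "\<forall>i j. b i j \<noteq> 0 \<longrightarrow> i * (\<alpha> * D) + j * (\<beta> * D) = A * (\<alpha> * D) + B * (\<beta> * D) \<longrightarrow>
      (i,j) \<noteq> (\<gamma>,d) \<longrightarrow> i * D + j * G m < \<gamma> * D + d * G m"
    using edge_term_after_start[OF _ on_edge _ R(2)] edge_term_before_end[OF _ on_edge _ R(3)] by blast+
  have "A * (\<alpha> * D) + B * (\<beta> * D) = \<gamma> * (\<alpha> * D) + d * (\<beta> * D)"
    unfolding level edge_level ..
  note step = ser_comp_edge_step[OF \<beta>_pos base_edge[of "Suc m", folded D_def, THEN conjunct1]
      base_edge[of "Suc m", folded D_def, THEN conjunct2] R(1-5) edge_coeffs refl this[symmetric]
      above first last]
  have Hs: "H (Suc m) = A * D + B * H m" and Gs: "G (Suc m) = \<gamma> * D + d * G m"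
    unfolding H_def G_def D_def by (simp_all only: hom_sum.simps distrib_left mult_ac)
  have M: "\<beta> * \<delta> ^ Suc (Suc m) = A * (\<alpha> * D) + B * (\<beta> * D)"
  proof -
    have "A * (\<alpha> * D) + B * (\<beta> * D) = \<beta> * \<delta> * D" unfolding level assms(1) ..
    then show ?thesis unfolding D_def by simp
  qed
  have "\<alpha> * (A * D + B * H m) + \<beta> * (B * B ^ Suc m) = A * (\<alpha> * D) + B * (\<alpha> * H m + \<beta> * B ^ Suc m)"
    "\<alpha> * (\<gamma> * D + d * G m) + \<beta> * (d * d ^ Suc m) = \<gamma> * (\<alpha> * D) + d * (\<alpha> * G m + \<beta> * d ^ Suc m)"
    by (simp_all only: distrib_left mult_ac add_ac)
  then have lines: "\<alpha> * (A * D + B * H m) + \<beta> * (B * B ^ Suc m) = A * (\<alpha> * D) + B * (\<beta> * D)"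
    "\<alpha> * (\<gamma> * D + d * G m) + \<beta> * (d * d ^ Suc m) = A * (\<alpha> * D) + B * (\<beta> * D)"
    unfolding R(2,3) using \<open>A * (\<alpha> * D) + B * (\<beta> * D) = \<gamma> * (\<alpha> * D) + d * (\<beta> * D)\<close> by simp_all
  have pow: "B ^ Suc (Suc m) = B * B ^ Suc m" "d ^ Suc (Suc m) = d * d ^ Suc m" by simp_all
  show ?case unfolding fibre_coeffs.simps(2)[of a b "Suc m"] Hs Gs M pow
    using step lines by blast
qed

end

context skew_edge
begin

lemma slope_of_edge: "- 1 / ((real \<gamma> - real A) / (real B - real d)) = - real \<alpha> / real \<beta>"
  using A_less_\<gamma> d_less_B by (simp add: of_nat_diff)

lemma strict_case:
  assumes "real \<delta> < y_intercept (real A, real B) (real \<gamma>, real d)" and "n \<ge> 1"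
  shows "let \<gamma>n = real \<gamma> * (\<Sum>k<n. real \<delta> ^ (n - 1 - k) * real d ^ k);
            Vn = (\<gamma>n, real d ^ n);
            Pn = (\<gamma>n - (real \<gamma> - real A) * real d ^ (n - 1), real B * real d ^ (n - 1))
        in preceding_vertex (fibre_coeffs a b n) Pn Vn
           \<and> slope Pn Vn = - 1 / ((real \<gamma> - real A) / (real B - real d))
           \<and> real \<delta> ^ n < y_intercept Pn Vn"
proof -
  obtain m where n: "n = Suc m" using assms(2) by (cases n) auto
  have "real \<beta> * real \<delta> < real K" using assms(1) \<beta>_pos by (simp add: real_edge_line field_simps)
  then have "\<beta> * \<delta> < K" by (metis of_nat_less_iff of_nat_mult)
  define G Al L where "G = \<gamma> * hom_sum \<delta> d m" and "Al = edge_start A \<gamma> \<delta> d m"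
    and "L = \<alpha> * G + \<beta> * d ^ Suc m"
  have S: "edge_supported \<alpha> \<beta> (fibre_coeffs a b n) L Al G"
    and nz: "fibre_coeffs a b n Al (B * d ^ m) \<noteq> 0" "fibre_coeffs a b n G (d ^ Suc m) \<noteq> 0"
    and below: "\<beta> * \<delta> ^ n < L" and GA: "G = Al + \<beta> * d ^ m"
    using fibre_edge_strict[OF \<open>\<beta> * \<delta> < K\<close>, of m] unfolding G_def Al_def L_def n by auto
  have lines: "\<alpha> * Al + \<beta> * (B * d ^ m) = L" "\<alpha> * G + \<beta> * d ^ Suc m = L"
    unfolding L_def GA B_mult[of "d ^ m"] by (simp_all only: distrib_left power_Suc mult_ac add_ac)
  have "Al < G" using GA \<beta>_pos d_pos by simp
  have "real \<alpha> * real Al + real \<beta> * real (B * d ^ m) = real L"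
    "real \<alpha> * real G + real \<beta> * real (d ^ Suc m) = real L"
    using lines by (metis of_nat_add of_nat_mult)+
  note line = slope_y_intercept_of_line[OF _ _ this]
  define \<gamma>n where "\<gamma>n = real \<gamma> * (\<Sum>k<n. real \<delta> ^ (n - 1 - k) * real d ^ k)"
  have "\<gamma>n = real G" unfolding \<gamma>n_def G_def n by (simp add: real_hom_sum)
  then have P: "(\<gamma>n - (real \<gamma> - real A) * real d ^ (n - 1), real B * real d ^ (n - 1)) = (real Al, real (B * d ^ m))"
    and V: "(\<gamma>n, real d ^ n) = (real G, real (d ^ Suc m))"
    using GA A_less_\<gamma> n by (simp_all add: of_nat_diff)
  have "real \<beta> * real \<delta> ^ n < real L" using below by (metis of_nat_less_iff of_nat_mult of_nat_power)
  then have "real \<delta> ^ n < real L / real \<beta>" using \<beta>_pos by (simp add: field_simps)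
  then show ?thesis
    unfolding Let_def \<gamma>n_def[symmetric] P V slope_of_edge
    using preceding_vertex_of_edge[OF \<alpha>_pos \<beta>_pos \<open>Al < G\<close> lines nz S] line \<beta>_pos \<open>Al < G\<close> n
    by simp
qed

lemma critical_case:
  assumes "real \<delta> = y_intercept (real A, real B) (real \<gamma>, real d)" and "n \<ge> 1"
  shows "let \<gamma>n = real \<gamma> * (\<Sum>k<n. real \<delta> ^ (n - 1 - k) * real d ^ k);
            Vn = (\<gamma>n, real d ^ n);
            Pn = ((\<Sum>k<n. real \<delta> ^ (n - 1 - k) * real B ^ k) * real A, real B ^ n)
        in preceding_vertex (fibre_coeffs a b n) Pn Vn
           \<and> slope Pn Vn = - 1 / ((real \<gamma> - real A) / (real B - real d))
           \<and> real \<delta> ^ n = y_intercept Pn Vn"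
proof -
  obtain m where n: "n = Suc m" using assms(2) by (cases n) auto
  have "real \<beta> * real \<delta> = real K" using assms(1) \<beta>_pos by (simp add: real_edge_line field_simps)
  then have "\<beta> * \<delta> = K" by (metis of_nat_eq_iff of_nat_mult)
  define G H L where "G = \<gamma> * hom_sum \<delta> d m" and "H = A * hom_sum \<delta> B m" and "L = \<beta> * \<delta> ^ n"
  have S: "edge_supported \<alpha> \<beta> (fibre_coeffs a b n) L H G"
    and nz: "fibre_coeffs a b n H (B ^ n) \<noteq> 0" "fibre_coeffs a b n G (d ^ n) \<noteq> 0"
    and lines: "\<alpha> * H + \<beta> * B ^ n = L" "\<alpha> * G + \<beta> * d ^ n = L"
    using fibre_edge_critical[OF \<open>\<beta> * \<delta> = K\<close>, of m] unfolding G_def H_def L_def n by auto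
  have "H < G"
  proof -
    have "d ^ n < B ^ n" using power_strict_mono[of d B n] d_less_B n by simp
    then have "\<beta> * d ^ n < \<beta> * B ^ n" using \<beta>_pos by simp
    then have "\<alpha> * H < \<alpha> * G" using lines by linarith
    then show ?thesis using \<alpha>_pos by simp
  qed
  have "real \<alpha> * real H + real \<beta> * real (B ^ n) = real L" "real \<alpha> * real G + real \<beta> * real (d ^ n) = real L"
    using lines by (metis of_nat_add of_nat_mult)+
  note line = slope_y_intercept_of_line[OF _ _ this]
  have V: "real \<gamma> * (\<Sum>k<n. real \<delta> ^ (n - 1 - k) * real d ^ k) = real G"
    and P: "(\<Sum>k<n. real \<delta> ^ (n - 1 - k) * real B ^ k) * real A = real H"
    unfolding G_def H_def n by (simp_all add: real_hom_sum)
  have "real \<delta> ^ n = real L / real \<beta>" unfolding L_def using \<beta>_pos by simp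
  then show ?thesis
    unfolding Let_def P V slope_of_edge
    using preceding_vertex_of_edge[OF \<alpha>_pos \<beta>_pos \<open>H < G\<close> lines nz S] line \<beta>_pos \<open>H < G\<close>
    by simp
qed

end

theorem proposition3:
  fixes p :: "complex \<Rightarrow> complex" and q :: "complex \<Rightarrow> complex \<Rightarrow> complex"
    and a :: "nat \<Rightarrow> complex" and b :: "nat \<Rightarrow> nat \<Rightarrow> complex"
    and \<delta> A B \<gamma> d :: nat
  assumes p_exp: "has_expansion1 a p"
    and q_exp: "has_expansion2 b q"
    and delta_pos: "\<delta> \<ge> 1"
    and a_delta: "a \<delta> \<noteq> 0" and a_low: "\<forall>k<\<delta>. a k = 0"
    and b00: "b 0 0 = 0"
    and q_nonzero: "\<exists>i j. b i j \<noteq> 0"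
    and last_vertex: "(real \<gamma>, real d) \<in> np_vertices b"
    and last_max: "\<forall>X \<in> np_vertices b. fst X \<le> real \<gamma>"
    and prev_vertex: "preceding_vertex b (real A, real B) (real \<gamma>, real d)"
    and case2: "real \<delta> \<le> y_intercept (real A, real B) (real \<gamma>, real d)"
    and d_pos: "d > 0"
  shows
   "(real \<delta> < y_intercept (real A, real B) (real \<gamma>, real d) \<longrightarrow>
      (\<forall>n\<ge>1.
        let \<gamma>n = real \<gamma> * (\<Sum>k<n. real \<delta> ^ (n - 1 - k) * real d ^ k);
            Vn = (\<gamma>n, real d ^ n);
            Pn = (\<gamma>n - (real \<gamma> - real A) * real d ^ (n - 1), real B * real d ^ (n - 1));
            cn = germ_coeffs (skewQ p q n)
        in preceding_vertex cn Pn Vn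
           \<and> slope Pn Vn = - 1 / ((real \<gamma> - real A) / (real B - real d))
           \<and> real \<delta> ^ n < y_intercept Pn Vn))
  \<and> (real \<delta> = y_intercept (real A, real B) (real \<gamma>, real d) \<longrightarrow>
      (\<forall>n\<ge>1.
        let \<gamma>n = real \<gamma> * (\<Sum>k<n. real \<delta> ^ (n - 1 - k) * real d ^ k);
            Vn = (\<gamma>n, real d ^ n);
            Pn = ((\<Sum>k<n. real \<delta> ^ (n - 1 - k) * real B ^ k) * real A, real B ^ n);
            cn = germ_coeffs (skewQ p q n)
        in preceding_vertex cn Pn Vn
           \<and> slope Pn Vn = - 1 / ((real \<gamma> - real A) / (real B - real d))
           \<and> real \<delta> ^ n = y_intercept Pn Vn))"
proof -
  \<comment> \<open>\<open>q_nonzero\<close>, \<open>last_vertex\<close> and \<open>case2\<close> follow from the other hypotheses.\<close>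
  interpret skew_edge b A B \<gamma> d a \<delta>
    by unfold_locales (use last_max prev_vertex delta_pos a_delta a_low d_pos in auto)
  have "a 0 = 0" using a_low delta_pos by auto
  then have "germ_coeffs (skewQ p q n) = fibre_coeffs a b n" for n
    using germ_coeffs_eq has_expansion2_fibre_coeffs[OF p_exp _ q_exp b00] by blast
  then show ?thesis using strict_case critical_case by (simp add: Let_def)
qed

end
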